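(* Let $G$ be a reduced strongly co-Hopfian abelian group with torsion subgroup $T=\bigoplus_p T_p$. Then each $T_p$ is finite, and $G\cong \hat G$ for some subgroup $\hat G$ with $T\le \hat G\le \prod_p T_p$ (where $T$ is identified with $\bigoplus_p T_p\le\prod_p T_p$) such that $\hat G/T$ is torsion-free and divisible. In particular, if infinitely many $T_p$ are non-zero, $G$ is an sp-group.
   Context: All groups are abelian. A group $G$ is strongly co-Hopfian if for every endomorphism $f$ of $G$ there is $n\in\mathbb N$ with $f^n(G)=f^{n+1}(G)$. $T$ denotes the maximal torsion subgroup of $G$ and $T_p$ its $p$-primary component. A mixed group $G$ with infinitely many non-zero $p$-components $T_p$ is an sp-group if $G$ is (isomorphic to) a pure subgroup of $\prod_p T_p$ containing $\bigoplus_p T_p$. *)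

theory Defs
  imports Main "HOL-Computational_Algebra.Primes" "HOL-Library.Function_Algebras"
begin

text \<open>Abelian groups are modelled as types of class ab_group_add; the group G is the
whole type. Functions nat => 'a carry the pointwise group structure (Function_Algebras).\<close>

fun nmul :: "nat \<Rightarrow> 'a::ab_group_add \<Rightarrow> 'a" where
  "nmul 0 x = 0"
| "nmul (Suc n) x = x + nmul n x"

definition subgrp :: "'a::ab_group_add set \<Rightarrow> bool" where
  "subgrp S \<longleftrightarrow> 0 \<in> S \<and> (\<forall>x\<in>S. \<forall>y\<in>S. x + y \<in> S) \<and> (\<forall>x\<in>S. - x \<in> S)"

definition additive_map :: "('a::ab_group_add \<Rightarrow> 'b::ab_group_add) \<Rightarrow> bool" where
  "additive_map f \<longleftrightarrow> (\<forall>x y. f (x + y) = f x + f y)"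

definition strongly_co_Hopfian :: "'a::ab_group_add itself \<Rightarrow> bool" where
  "strongly_co_Hopfian _ \<longleftrightarrow>
     (\<forall>f :: 'a \<Rightarrow> 'a. additive_map f \<longrightarrow> (\<exists>n. range (f ^^ n) = range (f ^^ Suc n)))"

definition divisible_subgrp :: "'a::ab_group_add set \<Rightarrow> bool" where
  "divisible_subgrp D \<longleftrightarrow> subgrp D \<and> (\<forall>x\<in>D. \<forall>n>0. \<exists>y\<in>D. nmul n y = x)"

definition reduced_grp :: "'a::ab_group_add itself \<Rightarrow> bool" where
  "reduced_grp _ \<longleftrightarrow> (\<forall>D :: 'a set. divisible_subgrp D \<longrightarrow> D = {0})"

definition torsion_part :: "'a::ab_group_add set" where
  "torsion_part = {x. \<exists>n>0. nmul n x = 0}"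

definition ppart :: "nat \<Rightarrow> 'a::ab_group_add set" where
  "ppart p = {x. \<exists>k. nmul (p ^ k) x = 0}"

definition prodT :: "(nat \<Rightarrow> 'a::ab_group_add) set" where
  "prodT = {h. \<forall>p. (prime p \<longrightarrow> h p \<in> ppart p) \<and> (\<not> prime p \<longrightarrow> h p = 0)}"

definition sumT :: "(nat \<Rightarrow> 'a::ab_group_add) set" where
  "sumT = {h \<in> prodT. finite {p. h p \<noteq> 0}}"

definition isomorphic_to :: "'a::ab_group_add itself \<Rightarrow> 'b::ab_group_add set \<Rightarrow> bool" where
  "isomorphic_to _ H \<longleftrightarrow> (\<exists>\<phi> :: 'a \<Rightarrow> 'b. additive_map \<phi> \<and> inj \<phi> \<and> range \<phi> = H)"

definition pure_in :: "'a::ab_group_add set \<Rightarrow> 'a set \<Rightarrow> bool" where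
  "pure_in H P \<longleftrightarrow> (\<forall>n x. x \<in> H \<and> (\<exists>y\<in>P. x = nmul n y) \<longrightarrow> (\<exists>z\<in>H. x = nmul n z))"

definition quot_torsion_free :: "'a::ab_group_add set \<Rightarrow> 'a set \<Rightarrow> bool" where
  "quot_torsion_free H K \<longleftrightarrow> (\<forall>x\<in>H. \<forall>n>0. nmul n x \<in> K \<longrightarrow> x \<in> K)"

definition quot_divisible :: "'a::ab_group_add set \<Rightarrow> 'a set \<Rightarrow> bool" where
  "quot_divisible H K \<longleftrightarrow> (\<forall>x\<in>H. \<forall>n>0. \<exists>y\<in>H. nmul n y - x \<in> K)"

definition sp_group :: "'a::ab_group_add itself \<Rightarrow> bool" where
  "sp_group _ \<longleftrightarrow> infinite {p. prime p \<and> (ppart p :: 'a set) \<noteq> {0}} \<and>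
     (\<exists>H :: (nat \<Rightarrow> 'a) set. subgrp H \<and> sumT \<subseteq> H \<and> H \<subseteq> prodT \<and> pure_in H prodT
        \<and> isomorphic_to TYPE('a) H)"

end

(*
  Applied to multiplication by n, strong co-Hopficity gives n^k G = n^(k+1) G for some k;
  hence G/T is divisible, and for n = p the p-divisible subgroup T_p \<inter> p^k G of the reduced
  group G vanishes, so T_p is bounded by p^k. If T_p were infinite, so would be its socle G[p],
  and some layer G[p] \<inter> p^j G would be infinite with G[p] \<inter> p^(j+1) G finite. Picking
  elements of that layer independent modulo p^(j+1) G and dividing them by p^j yields a bounded
  pure subgroup isomorphic to a countable direct sum of copies of Z/p^(j+1); it is a direct summand,
  and the shift of its basis is an endomorphism of G whose images never stabilise.
  So every T_p is finite, hence a direct summand with projection R_p, and g \<mapsto> (R_p g)_p maps G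
  into the product of the T_p. Its kernel is divisible because G/T is, hence zero as G is reduced;
  the image contains the direct sum of the T_p, and divisibility of G/T makes the image pure in the
  product with divisible torsion-free quotient by that direct sum.
*)
theory Submission
  imports Defs "HOL-Library.Set_Algebras"
begin

section \<open>Natural multiples, additive maps and subgroups\<close>

lemma nmul_add_left: "nmul (m + n) x = nmul m x + nmul n x"
  by (induction m) (auto simp: algebra_simps)

lemma nmul_add_right: "nmul n (x + y) = nmul n x + nmul n y"
  by (induction n) (auto simp: algebra_simps)

lemma nmul_zero [simp]: "nmul n 0 = 0"
  by (induction n) auto

lemma nmul_mult: "nmul (m * n) x = nmul m (nmul n x)"
  by (induction m) (auto simp: nmul_add_left nmul_add_right)

lemma nmul_neg: "nmul n (- x) = - nmul n x"
  by (induction n) (auto simp: algebra_simps)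

lemma nmul_diff: "nmul n (x - y) = nmul n x - nmul n y"
  using nmul_add_right[of n x "- y"] by (simp add: nmul_neg)

lemma nmul_diff_left:
  assumes "m \<le> n"
  shows "nmul (n - m) x = nmul n x - nmul m x"
proof -
  have "nmul n x = nmul (n - m) x + nmul m x"
    using assms by (metis le_add_diff_inverse2 nmul_add_left)
  then show ?thesis
    by simp
qed

lemma nmul_sum: "nmul n (sum f A) = (\<Sum>i\<in>A. nmul n (f i))"
  by (induction A rule: infinite_finite_induct) (auto simp: nmul_add_right)

lemma nmul_fun_apply: "nmul n h q = nmul n (h q)"
  by (induction n) auto

lemma nmul_power_Suc: "nmul (p ^ Suc i) x = nmul (p ^ i) (nmul p x)"
  by (metis mult.commute nmul_mult power_Suc)

lemma funpow_nmul: "nmul m ^^ n = nmul (m ^ n)"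
  by (induction n) (auto simp: nmul_mult)

lemma nmul_eq_0_dvd: "nmul m x = 0 \<Longrightarrow> m dvd n \<Longrightarrow> nmul n x = 0"
  by (metis dvdE mult.commute nmul_mult nmul_zero)

lemma nmul_mod: "nmul m x = 0 \<Longrightarrow> nmul n x = nmul (n mod m) x"
  by (metis add.left_neutral div_mult_mod_eq nmul_add_left nmul_mult nmul_zero mult.commute)

lemma nmul_coprime_eq_0:
  assumes "nmul a x = 0" "nmul b x = 0" "coprime a b"
  shows "x = 0"
proof (cases "a = 0")
  case False
  then obtain u v where "a * u = b * v + gcd a b"
    using bezout_nat by blast
  then have "a * u = b * v + 1"
    using assms(3) by simp
  then have "nmul (u * a) x = nmul (v * b) x + x"
    by (simp add: mult.commute nmul_add_left)
  then show ?thesis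
    using assms(1,2) by (simp add: nmul_mult)
qed (use assms in simp)

lemma nmul_inverse:
  assumes "nmul P y = 0" "coprime u P"
  shows "\<exists>v. nmul (u * v) y = y"
proof (cases "u = 0")
  case False
  then obtain v w where "u * v = P * w + gcd u P"
    using bezout_nat by blast
  then have "u * v = P * w + 1"
    using assms(2) by simp
  then have "nmul (u * v) y = nmul (w * P) y + y"
    by (simp add: mult.commute nmul_add_left)
  then show ?thesis
    using assms(1) by (auto simp: nmul_mult)
qed (use assms in simp)

lemma neg_nmul_eq_nmul_pred_mult:
  assumes "nmul Q z = 0" "0 < Q"
  shows "- nmul m z = nmul ((Q - 1) * m) z"
proof -
  have "nmul ((Q - 1) * m) z + nmul m z = nmul (m * Q) z"
    using assms(2) by (simp add: nmul_add_left[symmetric] algebra_simps)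
  also have "\<dots> = 0"
    using assms(1) by (simp add: nmul_mult)
  finally show ?thesis
    by (simp add: add_eq_0_iff2)
qed

lemma additive_map_add: "additive_map f \<Longrightarrow> f (x + y) = f x + f y"
  unfolding additive_map_def by blast

lemma additive_map_0: "additive_map f \<Longrightarrow> f 0 = 0"
  by (metis add_cancel_right_right add_0 additive_map_add)

lemma additive_map_neg: "additive_map f \<Longrightarrow> f (- x) = - f x"
  by (metis additive_map_0 additive_map_add add.right_inverse eq_neg_iff_add_eq_0)

lemma additive_map_diff:
  assumes "additive_map f"
  shows "f (x - y) = f x - f y"
  using additive_map_add[OF assms, of x "- y"] additive_map_neg[OF assms, of y] by simp

lemma additive_map_nmul:
  assumes "additive_map f"
  shows "f (nmul n x) = nmul n (f x)"
  by (induction n) (simp_all add: assms additive_map_0 additive_map_add)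

lemma additive_map_sum:
  assumes "additive_map f"
  shows "f (sum g A) = (\<Sum>i\<in>A. f (g i))"
  by (induction A rule: infinite_finite_induct) (simp_all add: assms additive_map_0 additive_map_add)

lemma additive_map_nmul_map: "additive_map (nmul n)"
  by (simp add: additive_map_def nmul_add_right)

lemma subgrp_0: "subgrp S \<Longrightarrow> 0 \<in> S"
  unfolding subgrp_def by blast

lemma subgrp_add: "subgrp S \<Longrightarrow> x \<in> S \<Longrightarrow> y \<in> S \<Longrightarrow> x + y \<in> S"
  unfolding subgrp_def by blast

lemma subgrp_neg: "subgrp S \<Longrightarrow> x \<in> S \<Longrightarrow> - x \<in> S"
  unfolding subgrp_def by blast

lemma subgrp_diff: "subgrp S \<Longrightarrow> x \<in> S \<Longrightarrow> y \<in> S \<Longrightarrow> x - y \<in> S"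
  by (metis diff_conv_add_uminus subgrp_add subgrp_neg)

lemma subgrp_nmul: "subgrp S \<Longrightarrow> x \<in> S \<Longrightarrow> nmul n x \<in> S"
  by (induction n) (simp_all add: subgrp_0 subgrp_add)

lemma subgrp_sum: "subgrp S \<Longrightarrow> (\<And>i. i \<in> A \<Longrightarrow> f i \<in> S) \<Longrightarrow> sum f A \<in> S"
  by (induction A rule: infinite_finite_induct) (simp_all add: subgrp_0 subgrp_add)

lemma subgrp_Int: "subgrp A \<Longrightarrow> subgrp B \<Longrightarrow> subgrp (A \<inter> B)"
  unfolding subgrp_def by blast

lemma subgrp_set_plus:
  assumes "subgrp A" "subgrp B"
  shows "subgrp (A + B)"
  unfolding subgrp_def
proof (intro conjI ballI)
  have "0 \<in> A" "0 \<in> B"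
    using assms subgrp_0 by blast+
  then have "0 + 0 \<in> A + B"
    by (rule set_plus_intro)
  then show "0 \<in> A + B"
    by (simp only: add_0)
  show "x + y \<in> A + B" if x: "x \<in> A + B" and y: "y \<in> A + B" for x y
  proof -
    obtain a b a' b' where "x = a + b" "a \<in> A" "b \<in> B" "y = a' + b'" "a' \<in> A" "b' \<in> B"
      using set_plus_elim[OF x] set_plus_elim[OF y] by metis
    then have "x + y = (a + a') + (b + b')"
      by (simp add: algebra_simps)
    moreover have "a + a' \<in> A" "b + b' \<in> B"
      using \<open>a \<in> A\<close> \<open>a' \<in> A\<close> \<open>b \<in> B\<close> \<open>b' \<in> B\<close> subgrp_add assms by blast+
    ultimately show ?thesis
      by (simp add: set_plus_intro)
  qed
  show "- x \<in> A + B" if x: "x \<in> A + B" for x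
  proof -
    obtain a b where "x = a + b" "a \<in> A" "b \<in> B"
      using set_plus_elim[OF x] by metis
    then have "- x = - a + - b"
      by simp
    then show ?thesis
      using \<open>a \<in> A\<close> \<open>b \<in> B\<close> subgrp_neg assms set_plus_intro by metis
  qed
qed

lemma subgrp_range:
  assumes "additive_map f"
  shows "subgrp (range f)"
  unfolding subgrp_def
proof (intro conjI ballI)
  show "0 \<in> range f"
    using additive_map_0[OF assms] by (auto intro: range_eqI[of 0 f 0])
  show "x + y \<in> range f" if x: "x \<in> range f" and y: "y \<in> range f" for x y
  proof -
    obtain a b where "x = f a" "y = f b"
      using x y by blast
    then have "x + y = f (a + b)"
      using additive_map_add[OF assms] by simp
    then show ?thesis
      by blast
  qed
  show "- x \<in> range f" if x: "x \<in> range f" for x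
  proof -
    obtain a where "x = f a"
      using x by blast
    then have "- x = f (- a)"
      using additive_map_neg[OF assms] by simp
    then show ?thesis
      by blast
  qed
qed

lemma subgrp_kernel: "additive_map f \<Longrightarrow> subgrp {x. f x = 0}"
  unfolding subgrp_def by (simp add: additive_map_0 additive_map_add additive_map_neg)

lemma subgrp_Union_chain:
  assumes "\<C> \<noteq> {}" "\<And>X. X \<in> \<C> \<Longrightarrow> subgrp X" "\<And>X Y. X \<in> \<C> \<Longrightarrow> Y \<in> \<C> \<Longrightarrow> X \<subseteq> Y \<or> Y \<subseteq> X"
  shows "subgrp (\<Union>\<C>)"
  unfolding subgrp_def
proof (intro conjI ballI)
  show "0 \<in> \<Union>\<C>"
    using assms(1,2) subgrp_0 by blast
  show "- x \<in> \<Union>\<C>" if "x \<in> \<Union>\<C>" for x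
    using that assms(2) subgrp_neg by blast
  show "x + y \<in> \<Union>\<C>" if x: "x \<in> \<Union>\<C>" and y: "y \<in> \<Union>\<C>" for x y
  proof -
    obtain X Y where "x \<in> X" "y \<in> Y" "X \<in> \<C>" "Y \<in> \<C>"
      using x y by blast
    then show ?thesis
      using assms(2) assms(3)[of X Y] subgrp_add by blast
  qed
qed

lemma subgrp_multiples:
  assumes "nmul N x = 0" "0 < N"
  shows "subgrp (range (\<lambda>n. nmul n x))"
  unfolding subgrp_def
proof (intro conjI ballI)
  show "0 \<in> range (\<lambda>n. nmul n x)"
    by (metis nmul.simps(1) rangeI)
  show "a + b \<in> range (\<lambda>n. nmul n x)" if "a \<in> range (\<lambda>n. nmul n x)" "b \<in> range (\<lambda>n. nmul n x)" for a b
    using that by (auto simp: nmul_add_left[symmetric])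
  show "- a \<in> range (\<lambda>n. nmul n x)" if "a \<in> range (\<lambda>n. nmul n x)" for a
    using that neg_nmul_eq_nmul_pred_mult[OF assms] by auto
qed

definition int_multiples :: "'a::ab_group_add \<Rightarrow> 'a set" where
  "int_multiples g = {nmul a g - nmul b g | a b. True}"

lemma subgrp_int_multiples: "subgrp (int_multiples g)"
  unfolding subgrp_def
proof (intro conjI ballI)
  have "0 = nmul 0 g - nmul 0 g"
    by simp
  then show "0 \<in> int_multiples g"
    unfolding int_multiples_def by blast
  show "x + y \<in> int_multiples g" if x: "x \<in> int_multiples g" and y: "y \<in> int_multiples g" for x y
  proof -
    obtain a b c d where "x = nmul a g - nmul b g" "y = nmul c g - nmul d g"
      using x y unfolding int_multiples_def by blast
    then have "x + y = nmul (a + c) g - nmul (b + d) g"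
      by (simp add: nmul_add_left)
    then show ?thesis
      unfolding int_multiples_def by blast
  qed
  show "- x \<in> int_multiples g" if x: "x \<in> int_multiples g" for x
  proof -
    obtain a b where "x = nmul a g - nmul b g"
      using x unfolding int_multiples_def by blast
    then have "- x = nmul b g - nmul a g"
      by simp
    then show ?thesis
      unfolding int_multiples_def by blast
  qed
qed

lemma subgrp_ppart: "subgrp (ppart p)"
proof -
  have "nmul (p ^ (a + b)) (x + y) = 0" if "nmul (p ^ a) x = 0" "nmul (p ^ b) y = 0" for a b x y
    using that nmul_eq_0_dvd[of "p ^ a" x] nmul_eq_0_dvd[of "p ^ b" y]
    by (simp add: nmul_add_right power_add)
  then show ?thesis
    unfolding subgrp_def ppart_def by (auto simp: nmul_neg intro: exI[of _ 0]) blast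
qed

lemma subgrp_torsion_part: "subgrp torsion_part"
  unfolding subgrp_def
proof (intro conjI ballI)
  show "0 \<in> torsion_part"
    unfolding torsion_part_def by (auto intro: exI[of _ 1])
  show "x + y \<in> torsion_part" if x: "x \<in> torsion_part" and y: "y \<in> torsion_part" for x y
  proof -
    obtain a b where ab: "0 < a" "nmul a x = 0" "0 < b" "nmul b y = 0"
      using x y unfolding torsion_part_def by blast
    then have "nmul (a * b) (x + y) = 0"
      using nmul_eq_0_dvd[of a x "a * b"] nmul_eq_0_dvd[of b y "a * b"] by (simp add: nmul_add_right)
    moreover have "0 < a * b"
      using ab by simp
    ultimately show ?thesis
      unfolding torsion_part_def by blast
  qed
  show "- x \<in> torsion_part" if "x \<in> torsion_part" for x
    using that unfolding torsion_part_def by (auto simp: nmul_neg)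
qed

lemma ppart_subset_torsion_part:
  assumes "prime p"
  shows "ppart p \<subseteq> torsion_part"
proof
  fix x assume "x \<in> ppart p"
  then obtain k where "nmul (p ^ k) x = 0"
    unfolding ppart_def by blast
  moreover have "0 < p ^ k"
    using prime_gt_0_nat[OF assms] by simp
  ultimately show "x \<in> torsion_part"
    unfolding torsion_part_def by blast
qed

lemma ppart_eq_0_if_coprime:
  assumes "prime p" "x \<in> ppart p" "nmul M x = 0" "\<not> p dvd M"
  shows "x = 0"
proof -
  obtain a where "nmul (p ^ a) x = 0"
    using assms(2) unfolding ppart_def by blast
  moreover have "coprime (p ^ a) M"
    using prime_imp_coprime[OF assms(1,4)] by simp
  ultimately show ?thesis
    using nmul_coprime_eq_0 assms(3) by blast
qed

section \<open>Retractions and bounded homogeneous summands\<close>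

definition retraction :: "('a::ab_group_add \<Rightarrow> 'a) \<Rightarrow> 'a set \<Rightarrow> bool" where
  "retraction \<rho> A \<longleftrightarrow> additive_map \<rho> \<and> (\<forall>a\<in>A. \<rho> a = a) \<and> range \<rho> \<subseteq> A"

lemma retraction_if_complement:
  assumes A: "subgrp A" and C: "subgrp C" and disjoint: "A \<inter> C \<subseteq> {0}" and span: "A + C = UNIV"
  shows "\<exists>\<rho>. retraction \<rho> A"
proof -
  have unique: "a = a'" if "a \<in> A" "a' \<in> A" "g - a \<in> C" "g - a' \<in> C" for g a a'
  proof -
    have "a - a' = (g - a') - (g - a)"
      by simp
    then have "a - a' \<in> C"
      using subgrp_diff[OF C] that by metis
    moreover have "a - a' \<in> A"
      using subgrp_diff[OF A] that by blast
    ultimately show ?thesis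
      using disjoint by auto
  qed
  have "\<exists>a. a \<in> A \<and> g - a \<in> C" for g
  proof -
    obtain a c where "g = a + c" "a \<in> A" "c \<in> C"
      using set_plus_elim[of g A C] span by blast
    then show ?thesis
      by (metis add_diff_cancel_left')
  qed
  then obtain \<rho> where \<rho>: "\<And>g. \<rho> g \<in> A" "\<And>g. g - \<rho> g \<in> C"
    by metis
  have "retraction \<rho> A"
    unfolding retraction_def additive_map_def
  proof (intro conjI allI ballI)
    fix x y
    have "(x + y) - (\<rho> x + \<rho> y) = (x - \<rho> x) + (y - \<rho> y)"
      by simp
    then have "(x + y) - (\<rho> x + \<rho> y) \<in> C"
      using subgrp_add[OF C] \<rho> by metis
    then show "\<rho> (x + y) = \<rho> x + \<rho> y"
      using unique subgrp_add[OF A] \<rho> by blast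
  next
    fix a assume "a \<in> A"
    then show "\<rho> a = a"
      using unique[of a "\<rho> a" a] \<rho> subgrp_0[OF C] by simp
  next
    show "range \<rho> \<subseteq> A"
      using \<rho> by blast
  qed
  then show ?thesis
    by blast
qed

definition maximal_disjoint :: "'a::ab_group_add set \<Rightarrow> 'a set \<Rightarrow> bool" where
  "maximal_disjoint C A \<longleftrightarrow> subgrp C \<and> C \<inter> A \<subseteq> {0} \<and>
     (\<forall>X. subgrp X \<and> C \<subseteq> X \<and> X \<inter> A \<subseteq> {0} \<longrightarrow> X = C)"

lemma exists_maximal_disjoint:
  assumes "subgrp P" "P \<inter> A \<subseteq> {0}"
  shows "\<exists>C. P \<subseteq> C \<and> maximal_disjoint C A"
proof -
  define \<C> where "\<C> = {C. subgrp C \<and> P \<subseteq> C \<and> C \<inter> A \<subseteq> {0}}"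
  have "\<exists>C\<in>\<C>. \<forall>X\<in>\<C>. C \<subseteq> X \<longrightarrow> X = C"
  proof (rule subset_Zorn_nonempty)
    show "\<C> \<noteq> {}"
      using assms unfolding \<C>_def by blast
  next
    fix \<D> assume "\<D> \<noteq> {}" "subset.chain \<C> \<D>"
    then have "\<D> \<subseteq> \<C>" "\<And>X Y. X \<in> \<D> \<Longrightarrow> Y \<in> \<D> \<Longrightarrow> X \<subseteq> Y \<or> Y \<subseteq> X"
      unfolding subset_chain_def by blast+
    moreover from this have "subgrp (\<Union>\<D>)"
      using subgrp_Union_chain[OF \<open>\<D> \<noteq> {}\<close>] unfolding \<C>_def by blast
    ultimately show "\<Union>\<D> \<in> \<C>"
      using \<open>\<D> \<noteq> {}\<close> unfolding \<C>_def by blast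
  qed
  then obtain C where C: "subgrp C" "P \<subseteq> C" "C \<inter> A \<subseteq> {0}"
    and max: "\<And>X. subgrp X \<Longrightarrow> P \<subseteq> X \<Longrightarrow> X \<inter> A \<subseteq> {0} \<Longrightarrow> C \<subseteq> X \<Longrightarrow> X = C"
    unfolding \<C>_def by auto
  then have "maximal_disjoint C A"
    unfolding maximal_disjoint_def by blast
  with C show ?thesis
    by blast
qed

lemma int_multiples_cases:
  assumes "z \<in> int_multiples g"
  obtains d where "z = nmul d g" | d where "z = - nmul d g"
proof -
  obtain a b where z: "z = nmul a g - nmul b g"
    using assms unfolding int_multiples_def by blast
  show ?thesis
  proof (cases "b \<le> a")
    case True
    then show ?thesis
      using that(1)[of "a - b"] z by (simp add: nmul_diff_left)
  next
    case False
    then show ?thesis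
      using that(2)[of "b - a"] z by (simp add: nmul_diff_left)
  qed
qed

lemma self_mem_int_multiples: "g \<in> int_multiples g"
proof -
  have "g = nmul 1 g - nmul 0 g"
    by simp
  then show ?thesis
    unfolding int_multiples_def by blast
qed

lemma maximal_disjoint_multiple:
  assumes max: "maximal_disjoint C A" and A: "subgrp A" and g: "g \<notin> A + C"
  shows "\<exists>d>0. \<exists>a\<in>A. a \<noteq> 0 \<and> nmul d g - a \<in> C"
proof -
  have C: "subgrp C" and disjoint: "C \<inter> A \<subseteq> {0}"
    using max by (simp_all add: maximal_disjoint_def)
  have "C \<subseteq> int_multiples g + C"
    by (rule set_zero_plus2[OF subgrp_0[OF subgrp_int_multiples]])
  moreover have "g \<notin> C"
    using g set_zero_plus2[OF subgrp_0[OF A]] by blast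
  moreover have "g + 0 \<in> int_multiples g + C"
    by (rule set_plus_intro[OF self_mem_int_multiples subgrp_0[OF C]])
  ultimately have "\<not> (int_multiples g + C) \<inter> A \<subseteq> {0}"
    using max subgrp_set_plus[OF subgrp_int_multiples C] unfolding maximal_disjoint_def by force
  then obtain x where "x \<in> int_multiples g + C" "x \<in> A" "x \<noteq> 0"
    by blast
  then obtain z c where a: "z + c \<in> A" "z + c \<noteq> 0" and z: "z \<in> int_multiples g" and c: "c \<in> C"
    by (auto elim: set_plus_elim)
  have "z \<noteq> 0"
    using a c disjoint by auto
  from z show ?thesis
  proof (cases rule: int_multiples_cases)
    case (1 d)
    then have "0 < d" "nmul d g - (z + c) = - c"
      using \<open>z \<noteq> 0\<close> by (auto intro: Nat.gr0I)
    then show ?thesis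
      using a subgrp_neg[OF C c] by metis
  next
    case (2 d)
    then have "0 < d" "nmul d g - (- (z + c)) = c"
      using \<open>z \<noteq> 0\<close> by (auto intro: Nat.gr0I)
    moreover have "- (z + c) \<in> A" "- (z + c) \<noteq> 0"
      using subgrp_neg[OF A a(1)] a(2) by (simp_all only: neg_equal_0_iff_equal not_False_eq_True)
    ultimately show ?thesis
      using c by metis
  qed
qed

lemma exists_prime_nmul_mem:
  assumes "0 < n" "nmul n g \<in> S" "g \<notin> S"
  shows "\<exists>h q. prime q \<and> h \<notin> S \<and> nmul q h \<in> S"
  using assms
proof (induction n arbitrary: g rule: less_induct)
  case (less n)
  have "n \<noteq> 1"
    using less.prems by auto
  then obtain q m where q: "prime q" and n: "n = q * m"
    using prime_factor_nat by (metis dvdE)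
  show ?case
  proof (cases "nmul m g \<in> S")
    case True
    have "0 < m" "m < n"
      using n less.prems(1) prime_gt_1_nat[OF q] by auto
    then show ?thesis
      using less.IH True less.prems(3) by blast
  next
    case False
    moreover have "nmul q (nmul m g) \<in> S"
      using n less.prems(2) by (simp add: nmul_mult)
    ultimately show ?thesis
      using q by blast
  qed
qed

lemma maximal_disjoint_prime_step:
  assumes max: "maximal_disjoint C A" and A: "subgrp A" and q: "prime q" and qh: "nmul q h \<in> C"
  shows "h \<in> A + C"
proof (rule ccontr)
  assume h: "h \<notin> A + C"
  have C: "subgrp C" and disjoint: "C \<inter> A \<subseteq> {0}"
    using max by (simp_all add: maximal_disjoint_def)
  obtain d a where d: "0 < d" "a \<in> A" "a \<noteq> 0" "nmul d h - a \<in> C"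
    using maximal_disjoint_multiple[OF max A h] by blast
  show False
  proof (cases "q dvd d")
    case True
    then obtain k where "d = k * q"
      by (metis dvdE mult.commute)
    then have "nmul d h \<in> C"
      using subgrp_nmul[OF C qh] by (simp add: nmul_mult)
    then have "nmul d h - (nmul d h - a) \<in> C"
      using subgrp_diff[OF C _ d(4)] by blast
    then show False
      using d(2,3) disjoint by auto
  next
    case False
    then have "coprime d q"
      using prime_imp_coprime[OF q] by (simp add: coprime_commute)
    then obtain x y where "d * x = q * y + 1"
      using bezout_nat[of d q] d(1) by auto
    then have "h = nmul x (nmul d h) - nmul y (nmul q h)"
      by (simp add: nmul_add_left mult.commute flip: nmul_mult)
    also have "\<dots> = nmul x a + (nmul x (nmul d h - a) - nmul y (nmul q h))"
      by (simp add: nmul_diff)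
    finally have "h = nmul x a + (nmul x (nmul d h - a) - nmul y (nmul q h))" .
    moreover have "nmul x (nmul d h - a) - nmul y (nmul q h) \<in> C"
      using C d(4) qh by (simp add: subgrp_diff subgrp_nmul)
    ultimately have "h \<in> A + C"
      using subgrp_nmul[OF A d(2)] by (metis set_plus_intro)
    then show False
      using h by blast
  qed
qed

lemma set_plus_add_left:
  assumes "subgrp A" "a \<in> A" "x \<in> A + C"
  shows "a + x \<in> A + C"
proof -
  obtain b c where "x = b + c" "b \<in> A" "c \<in> C"
    using assms(3) by (auto elim: set_plus_elim)
  moreover have "a + (b + c) = (a + b) + c"
    by (simp add: add.assoc)
  ultimately show ?thesis
    using subgrp_add[OF assms(1,2)] set_plus_intro by metis
qed

lemma maximal_disjoint_spans:
  assumes max: "maximal_disjoint C A" and A: "subgrp A"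
    and divisible: "\<And>q h a c. prime q \<Longrightarrow> a \<in> A \<Longrightarrow> c \<in> C \<Longrightarrow> nmul q h = a + c \<Longrightarrow> \<exists>a'\<in>A. a = nmul q a'"
  shows "A + C = UNIV"
proof (rule ccontr)
  assume "A + C \<noteq> UNIV"
  then obtain g where g: "g \<notin> A + C"
    by blast
  obtain d a where "0 < d" "a \<in> A" "nmul d g - a \<in> C"
    using maximal_disjoint_multiple[OF max A g] by blast
  then have "0 < d" "nmul d g \<in> A + C"
    using set_plus_intro[of a A "nmul d g - a" C] by auto
  then obtain h q where q: "prime q" and h: "h \<notin> A + C" "nmul q h \<in> A + C"
    using exists_prime_nmul_mem g by blast
  then obtain a c where ac: "a \<in> A" "c \<in> C" "nmul q h = a + c"
    by (auto elim: set_plus_elim)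
  then obtain a' where a': "a' \<in> A" "a = nmul q a'"
    using divisible[OF q] by blast
  then have "nmul q (h - a') \<in> C"
    using ac by (simp add: nmul_diff)
  then have "a' + (h - a') \<in> A + C"
    using maximal_disjoint_prime_step[OF max A q] set_plus_add_left[OF A a'(1)] by blast
  then show False
    using h(1) by simp
qed

lemma retraction_onto_homogeneous:
  assumes A: "subgrp A" and p: "prime p" and e: "0 < e"
    and bounded: "\<And>a. a \<in> A \<Longrightarrow> nmul (p ^ e) a = 0"
    and disjoint: "A \<inter> range (nmul (p ^ e)) \<subseteq> {0}"
    and socle: "\<And>a. a \<in> A \<Longrightarrow> nmul (p ^ (e - 1)) a = 0 \<Longrightarrow> \<exists>a'\<in>A. a = nmul p a'"
  shows "\<exists>\<rho>. retraction \<rho> A"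
proof -
  have "range (nmul (p ^ e)) \<inter> A \<subseteq> {0}"
    using disjoint by blast
  from exists_maximal_disjoint[OF subgrp_range[OF additive_map_nmul_map] this]
  obtain C where PC: "range (nmul (p ^ e)) \<subseteq> C" and max: "maximal_disjoint C A"
    by blast
  have C: "subgrp C" and CA: "C \<inter> A \<subseteq> {0}"
    using max by (simp_all add: maximal_disjoint_def)
  have "A + C = UNIV"
  proof (rule maximal_disjoint_spans[OF max A])
    text \<open>For \<open>q = p\<close> use \<open>p\<^sup>e G \<subseteq> C\<close>; for \<open>q \<noteq> p\<close>, \<open>q\<close> is invertible modulo \<open>p\<^sup>e\<close>.\<close>
    fix q h a c assume q: "prime q" and a: "a \<in> A" "c \<in> C" "nmul q h = a + c"
    show "\<exists>a'\<in>A. a = nmul q a'"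
    proof (cases "q = p")
      case True
      have "nmul (p ^ (e - 1)) (a + c) = nmul (p ^ e) h"
        using power_minus_mult[OF e, of p] a(3) True by (metis nmul_mult)
      then have "nmul (p ^ (e - 1)) a + nmul (p ^ (e - 1)) c \<in> C"
        using PC by (auto simp: nmul_add_right[symmetric])
      then have "nmul (p ^ (e - 1)) a \<in> C"
        using subgrp_diff[OF C _ subgrp_nmul[OF C a(2), of "p ^ (e - 1)"]] by fastforce
      then have "nmul (p ^ (e - 1)) a = 0"
        using CA subgrp_nmul[OF A a(1)] by blast
      then show ?thesis
        using socle a(1) True by blast
    next
      case False
      then have "coprime q (p ^ e)"
        using primes_coprime[OF q p] by simp
      then obtain v where "nmul (q * v) a = a"
        using nmul_inverse[OF bounded[OF a(1)]] by blast
      then show ?thesis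
        using subgrp_nmul[OF A a(1)] by (metis nmul_mult)
    qed
  qed
  moreover have "A \<inter> C \<subseteq> {0}"
    using CA by blast
  ultimately show ?thesis
    using retraction_if_complement[OF A C] by blast
qed

section \<open>Finite pure \<open>p\<close>-subgroups are summands\<close>

definition p_pure :: "nat \<Rightarrow> 'a::ab_group_add set \<Rightarrow> bool" where
  "p_pure p B \<longleftrightarrow> (\<forall>b r g. b \<in> B \<longrightarrow> b = nmul (p ^ r) g \<longrightarrow> (\<exists>b'\<in>B. b = nmul (p ^ r) b'))"

lemma p_pure_ppart: "p_pure p (ppart p)"
  unfolding p_pure_def
proof (intro allI impI)
  fix b g r assume b: "b \<in> ppart p" "b = nmul (p ^ r) g"
  then obtain a where "nmul (p ^ a) b = 0"
    unfolding ppart_def by blast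
  then have "nmul (p ^ (a + r)) g = 0"
    using b(2) by (simp add: power_add nmul_mult)
  then show "\<exists>b'\<in>ppart p. b = nmul (p ^ r) b'"
    using b(2) unfolding ppart_def by blast
qed

lemma p_pure_retraction_kernel:
  assumes \<sigma>: "retraction \<sigma> A" and AB: "A \<subseteq> B" and B: "subgrp B" "p_pure p B"
  shows "p_pure p (B \<inter> {b. \<sigma> b = 0})"
  unfolding p_pure_def
proof (intro allI impI)
  fix b g r assume b: "b \<in> B \<inter> {b. \<sigma> b = 0}" "b = nmul (p ^ r) g"
  have \<sigma>_add: "additive_map \<sigma>" and \<sigma>_id: "\<And>a. a \<in> A \<Longrightarrow> \<sigma> a = a" and \<sigma>_range: "\<And>g. \<sigma> g \<in> A"
    using \<sigma> unfolding retraction_def by blast+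
  obtain b0 where b0: "b0 \<in> B" "b = nmul (p ^ r) b0"
    using B(2) b unfolding p_pure_def by blast
  have "b0 - \<sigma> b0 \<in> B"
    using subgrp_diff[OF B(1) b0(1)] AB \<sigma>_range by blast
  moreover have "\<sigma> (b0 - \<sigma> b0) = 0"
    using additive_map_diff[OF \<sigma>_add] \<sigma>_id[OF \<sigma>_range] by simp
  moreover have "nmul (p ^ r) (b0 - \<sigma> b0) = b - \<sigma> b"
    using b0(2) by (simp add: nmul_diff additive_map_nmul[OF \<sigma>_add])
  then have "nmul (p ^ r) (b0 - \<sigma> b0) = b"
    using b(1) by simp
  ultimately show "\<exists>b'\<in>B \<inter> {b. \<sigma> b = 0}. b = nmul (p ^ r) b'"
    by blast
qed

lemma retraction_extend:
  assumes \<sigma>: "retraction \<sigma> A" and AB: "A \<subseteq> B" and B: "subgrp B"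
    and \<rho>: "retraction \<rho> (B \<inter> {b. \<sigma> b = 0})"
  shows "retraction (\<lambda>g. \<sigma> g + \<rho> (g - \<sigma> g)) B"
proof -
  have \<sigma>_add: "additive_map \<sigma>" and \<sigma>_id: "\<And>a. a \<in> A \<Longrightarrow> \<sigma> a = a" and \<sigma>_range: "\<And>g. \<sigma> g \<in> A"
    using \<sigma> unfolding retraction_def by auto
  have \<rho>_add: "additive_map \<rho>" and \<rho>_id: "\<And>b. b \<in> B \<Longrightarrow> \<sigma> b = 0 \<Longrightarrow> \<rho> b = b"
    and \<rho>_range: "\<And>g. \<rho> g \<in> B \<inter> {b. \<sigma> b = 0}"
    using \<rho> unfolding retraction_def by blast+
  show ?thesis
    unfolding retraction_def
  proof (intro conjI ballI)
    show "additive_map (\<lambda>g. \<sigma> g + \<rho> (g - \<sigma> g))"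
      unfolding additive_map_def
      by (simp add: additive_map_add[OF \<sigma>_add] additive_map_add[OF \<rho>_add, symmetric] algebra_simps)
  next
    fix b assume "b \<in> B"
    moreover have "\<sigma> (b - \<sigma> b) = 0"
      using additive_map_diff[OF \<sigma>_add] \<sigma>_id[OF \<sigma>_range] by simp
    ultimately show "\<sigma> b + \<rho> (b - \<sigma> b) = b"
      using \<rho>_id subgrp_diff[OF B] AB \<sigma>_range by (metis add_diff_cancel_left' diff_add_cancel subsetD)
  next
    show "range (\<lambda>g. \<sigma> g + \<rho> (g - \<sigma> g)) \<subseteq> B"
      using subgrp_add[OF B] AB \<sigma>_range \<rho>_range by blast
  qed
qed

lemma exists_element_of_maximal_order:
  assumes "finite B" "B \<subseteq> ppart p" "B \<noteq> {0}" "0 \<in> B"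
  shows "\<exists>m x. (\<forall>b\<in>B. nmul (p ^ m) b = 0) \<and> x \<in> B \<and> nmul (p ^ (m - 1)) x \<noteq> 0"
proof -
  have "\<forall>b\<in>B. \<exists>k. nmul (p ^ k) b = 0"
    using assms(2) unfolding ppart_def by blast
  then obtain k where k: "\<And>b. b \<in> B \<Longrightarrow> nmul (p ^ k b) b = 0"
    by metis
  have "nmul (p ^ (\<Sum>b\<in>B. k b)) b = 0" if "b \<in> B" for b
  proof -
    have "k b \<le> (\<Sum>b\<in>B. k b)"
      using member_le_sum[OF that _ assms(1)] by blast
    then show ?thesis
      using k[OF that] nmul_eq_0_dvd le_imp_power_dvd by blast
  qed
  then have ex: "\<exists>M. \<forall>b\<in>B. nmul (p ^ M) b = 0"
    by blast
  define m where "m = (LEAST M. \<forall>b\<in>B. nmul (p ^ M) b = 0)"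
  have bounded: "\<forall>b\<in>B. nmul (p ^ m) b = 0"
    unfolding m_def by (rule LeastI_ex[OF ex])
  have "m \<noteq> 0"
  proof
    assume "m = 0"
    then have "B \<subseteq> {0}"
      using bounded by auto
    then show False
      using assms(3,4) by blast
  qed
  then have "\<not> (\<forall>b\<in>B. nmul (p ^ (m - 1)) b = 0)"
    using not_less_Least[of "m - 1" "\<lambda>M. \<forall>b\<in>B. nmul (p ^ M) b = 0"] unfolding m_def[symmetric]
    by simp
  then show ?thesis
    using bounded by blast
qed

lemma retraction_onto_cyclic:
  assumes p: "prime p" and B: "subgrp B" "p_pure p B"
    and bounded: "\<forall>b\<in>B. nmul (p ^ m) b = 0" and x: "x \<in> B" "nmul (p ^ (m - 1)) x \<noteq> 0"
  shows "\<exists>\<sigma>. retraction \<sigma> (range (\<lambda>n. nmul n x))"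
proof (rule retraction_onto_homogeneous[OF _ p])
  have xm: "nmul (p ^ m) x = 0"
    using bounded x(1) by blast
  show "0 < m"
    using x(2) xm by (cases m) auto
  show "subgrp (range (\<lambda>n. nmul n x))"
    using subgrp_multiples[OF xm] prime_gt_0_nat[OF p] by simp
  have AB: "range (\<lambda>n. nmul n x) \<subseteq> B"
    using subgrp_nmul[OF B(1) x(1)] by blast
  show "nmul (p ^ m) a = 0" if "a \<in> range (\<lambda>n. nmul n x)" for a
    using that AB bounded by blast
  show "range (\<lambda>n. nmul n x) \<inter> range (nmul (p ^ m)) \<subseteq> {0}"
    using AB bounded B(2) unfolding p_pure_def by fastforce
  show "\<exists>a'\<in>range (\<lambda>n. nmul n x). a = nmul p a'"
    if a: "a \<in> range (\<lambda>n. nmul n x)" "nmul (p ^ (m - 1)) a = 0" for a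
  proof -
    obtain n where n: "a = nmul n x"
      using a(1) by blast
    show ?thesis
    proof (cases "p dvd n")
      case True
      then obtain k where "n = p * k"
        by blast
      then show ?thesis
        using n by (auto simp: nmul_mult)
    next
      case False
      then have "coprime n (p ^ m)"
        using prime_imp_coprime[OF p] by (simp add: coprime_commute)
      moreover have "nmul (p ^ m) (nmul (p ^ (m - 1)) x) = 0"
        using xm by (metis mult.commute nmul_mult nmul_zero)
      ultimately obtain v where v: "nmul (n * v) (nmul (p ^ (m - 1)) x) = nmul (p ^ (m - 1)) x"
        using nmul_inverse by blast
      have "nmul n (nmul (p ^ (m - 1)) x) = 0"
        using a(2) n by (metis mult.commute nmul_mult)
      then have "nmul (p ^ (m - 1)) x = 0"
        using v by (metis mult.commute nmul_mult nmul_zero)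
      then show ?thesis
        using x(2) by blast
    qed
  qed
qed

lemma retraction_onto_finite_pure:
  assumes p: "prime p"
  shows "finite B \<Longrightarrow> subgrp B \<Longrightarrow> B \<subseteq> ppart p \<Longrightarrow> p_pure p B \<Longrightarrow> \<exists>\<rho>. retraction \<rho> B"
proof (induction "card B" arbitrary: B rule: less_induct)
  case less
  note finite = less.prems(1) and B = less.prems(2) and pure = less.prems(4)
  show ?case
  proof (cases "B = {0}")
    case True
    then have "retraction (\<lambda>_. 0) B"
      unfolding retraction_def additive_map_def by auto
    then show ?thesis
      by blast
  next
    case False
    then obtain m x where bounded: "\<forall>b\<in>B. nmul (p ^ m) b = 0" and x: "x \<in> B" "nmul (p ^ (m - 1)) x \<noteq> 0"
      using exists_element_of_maximal_order[OF finite less.prems(3)] subgrp_0[OF B] by blast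
    obtain \<sigma> where \<sigma>: "retraction \<sigma> (range (\<lambda>n. nmul n x))"
      using retraction_onto_cyclic[OF p B pure bounded x] by blast
    have AB: "range (\<lambda>n. nmul n x) \<subseteq> B"
      using subgrp_nmul[OF B x(1)] by blast
    define B' where "B' = B \<inter> {b. \<sigma> b = 0}"
    have "x \<in> range (\<lambda>n. nmul n x)"
      using range_eqI[of x "\<lambda>n. nmul n x" 1] by simp
    then have "\<sigma> x = x"
      using \<sigma> unfolding retraction_def by blast
    moreover have "x \<noteq> 0"
      using x(2) by auto
    ultimately have "x \<in> B - B'"
      using x(1) unfolding B'_def by auto
    then have "B' \<subset> B"
      unfolding B'_def by blast
    then have "\<exists>\<rho>. retraction \<rho> B'"
    proof (intro less.hyps psubset_card_mono[OF finite])
      show "finite B'" "B' \<subseteq> ppart p"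
        using finite less.prems(3) unfolding B'_def by auto
      show "subgrp B'"
        using \<sigma> unfolding B'_def retraction_def by (intro subgrp_Int[OF B subgrp_kernel]) blast
      show "p_pure p B'"
        unfolding B'_def by (rule p_pure_retraction_kernel[OF \<sigma> AB B pure])
    qed
    then show ?thesis
      using retraction_extend[OF \<sigma> AB B] unfolding B'_def by blast
  qed
qed

section \<open>Summands that are free \<open>\<int>/P\<close>-modules of infinite rank\<close>

definition lincomb :: "(nat \<Rightarrow> 'a::ab_group_add) \<Rightarrow> nat \<Rightarrow> (nat \<Rightarrow> nat) \<Rightarrow> 'a" where
  "lincomb x N m = (\<Sum>i<N. nmul (m i) (x i))"

definition nat_span :: "(nat \<Rightarrow> 'a::ab_group_add) \<Rightarrow> 'a set" where
  "nat_span x = {lincomb x N m | N m. True}"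

text \<open>The \<open>x i\<close> form a basis of a free \<open>\<int>/P\<close>-module.\<close>
definition independent_mod :: "(nat \<Rightarrow> 'a::ab_group_add) \<Rightarrow> nat \<Rightarrow> bool" where
  "independent_mod x P \<longleftrightarrow>
     (\<forall>i. nmul P (x i) = 0) \<and> (\<forall>N m i. lincomb x N m = 0 \<longrightarrow> i < N \<longrightarrow> P dvd m i)"

lemma lincomb_0 [simp]: "lincomb x 0 m = 0"
  by (simp add: lincomb_def)

lemma lincomb_Suc: "lincomb x (Suc N) m = lincomb x N m + nmul (m N) (x N)"
  by (simp add: lincomb_def)

lemma lincomb_pad: "N \<le> M \<Longrightarrow> lincomb x N m = lincomb x M (\<lambda>i. if i < N then m i else 0)"
  unfolding lincomb_def by (rule sum.mono_neutral_cong_left) auto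

lemma lincomb_add: "lincomb x N m1 + lincomb x N m2 = lincomb x N (\<lambda>i. m1 i + m2 i)"
  by (simp add: lincomb_def nmul_add_left sum.distrib)

lemma lincomb_nmul: "nmul k (lincomb x N m) = lincomb x N (\<lambda>i. k * m i)"
  by (simp add: lincomb_def nmul_sum nmul_mult)

lemma lincomb_killed:
  assumes "\<And>i. nmul P (x i) = 0"
  shows "nmul P (lincomb x N m) = 0"
proof -
  have "nmul P (nmul (m i) (x i)) = 0" for i
    using assms by (metis mult.commute nmul_mult nmul_zero)
  then show ?thesis
    unfolding lincomb_def nmul_sum by simp
qed

lemma lincomb_shift: "lincomb x (Suc N) (case_nat 0 m) = lincomb (\<lambda>i. x (Suc i)) N m"
  unfolding lincomb_def sum.lessThan_Suc_shift by simp

lemma lincomb_unit: "lincomb x (Suc i) (\<lambda>l. if l = i then 1 else 0) = x i"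
proof -
  have "lincomb x (Suc i) (\<lambda>l. if l = i then 1 else 0) = (\<Sum>l<Suc i. if l = i then x l else 0)"
    unfolding lincomb_def by (rule sum.cong) auto
  then show ?thesis
    by simp
qed

lemma lincomb_cong_mod:
  assumes "\<And>i. nmul P (x i) = 0" "\<And>i. i < N \<Longrightarrow> m1 i mod P = m2 i mod P"
  shows "lincomb x N m1 = lincomb x N m2"
  unfolding lincomb_def
proof (rule sum.cong)
  fix i assume "i \<in> {..<N}"
  then show "nmul (m1 i) (x i) = nmul (m2 i) (x i)"
    using assms nmul_mod[OF assms(1)] by (metis lessThan_iff)
qed simp

lemma nat_span_common:
  assumes "a \<in> nat_span x" "b \<in> nat_span x"
  shows "\<exists>N m1 m2. a = lincomb x N m1 \<and> b = lincomb x N m2"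
proof -
  obtain N1 m1 N2 m2 where "a = lincomb x N1 m1" "b = lincomb x N2 m2"
    using assms unfolding nat_span_def by blast
  then show ?thesis
    using lincomb_pad[of N1 "max N1 N2" x m1] lincomb_pad[of N2 "max N1 N2" x m2] by auto
qed

lemma neg_lincomb:
  assumes "\<And>i. nmul P (x i) = 0" "0 < P"
  shows "- lincomb x N m = lincomb x N (\<lambda>i. (P - 1) * m i)"
  unfolding lincomb_def sum_negf[symmetric] using neg_nmul_eq_nmul_pred_mult[OF assms] by simp

lemma subgrp_nat_span:
  assumes "\<And>i. nmul P (x i) = 0" "0 < P"
  shows "subgrp (nat_span x)"
  unfolding subgrp_def
proof (intro conjI ballI)
  have "0 = lincomb x 0 (\<lambda>_. 0)"
    by simp
  then show "0 \<in> nat_span x"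
    unfolding nat_span_def by blast
  show "a + b \<in> nat_span x" if ab: "a \<in> nat_span x" "b \<in> nat_span x" for a b
  proof -
    obtain N m1 m2 where "a = lincomb x N m1" "b = lincomb x N m2"
      using nat_span_common[OF ab] by blast
    then have "a + b = lincomb x N (\<lambda>i. m1 i + m2 i)"
      by (simp add: lincomb_add)
    then show ?thesis
      unfolding nat_span_def by blast
  qed
  show "- a \<in> nat_span x" if a: "a \<in> nat_span x" for a
  proof -
    obtain N m where "a = lincomb x N m"
      using a unfolding nat_span_def by blast
    then have "- a = lincomb x N (\<lambda>i. (P - 1) * m i)"
      using neg_lincomb[OF assms] by simp
    then show ?thesis
      unfolding nat_span_def by blast
  qed
qed

lemma mod_eq_if_dvd_add_pred_mult:
  fixes a b P :: nat
  assumes "0 < P" "P dvd a + (P - 1) * b"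
  shows "a mod P = b mod P"
proof -
  have "a + P * b = (a + (P - 1) * b) + b"
    using assms(1) by (cases P) (simp_all add: algebra_simps)
  then have "(a + P * b) mod P = ((a + (P - 1) * b) mod P + b) mod P"
    by (metis mod_add_left_eq)
  then show ?thesis
    using assms(2) by simp
qed

lemma independent_mod_coeff_eq:
  assumes indep: "independent_mod x P" and P: "0 < P"
    and eq: "lincomb x N m1 = lincomb x N m2" and i: "i < N"
  shows "m1 i mod P = m2 i mod P"
proof -
  have killed: "nmul P (x l) = 0" for l
    using indep unfolding independent_mod_def by blast
  have "lincomb x N (\<lambda>l. m1 l + (P - 1) * m2 l) = lincomb x N m1 - lincomb x N m2"
    unfolding lincomb_add[symmetric] neg_lincomb[OF killed P, symmetric] by simp
  then have "lincomb x N (\<lambda>l. m1 l + (P - 1) * m2 l) = 0"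
    using eq by simp
  then have "P dvd m1 i + (P - 1) * m2 i"
    using indep i unfolding independent_mod_def by blast
  then show ?thesis
    by (rule mod_eq_if_dvd_add_pred_mult[OF P])
qed

lemma independent_mod_shift_eq:
  assumes indep: "independent_mod x P" and P: "0 < P" and eq: "lincomb x N1 m1 = lincomb x N2 m2"
  shows "lincomb x (Suc N1) (case_nat 0 m1) = lincomb x (Suc N2) (case_nat 0 m2)"
proof -
  have killed: "nmul P (x i) = 0" for i
    using indep unfolding independent_mod_def by blast
  define M where "M = max N1 N2"
  define m1' where "m1' i = (if i < N1 then m1 i else 0)" for i
  define m2' where "m2' i = (if i < N2 then m2 i else 0)" for i
  have "lincomb x M m1' = lincomb x M m2'"
    using eq lincomb_pad[of N1 M x m1] lincomb_pad[of N2 M x m2] unfolding M_def m1'_def m2'_def by simp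
  then have "m1' i mod P = m2' i mod P" if "i < M" for i
    using independent_mod_coeff_eq[OF indep P] that by blast
  then have "lincomb (\<lambda>i. x (Suc i)) M m1' = lincomb (\<lambda>i. x (Suc i)) M m2'"
    using lincomb_cong_mod[OF killed] by blast
  then show ?thesis
    using lincomb_pad[of N1 M "\<lambda>i. x (Suc i)" m1] lincomb_pad[of N2 M "\<lambda>i. x (Suc i)" m2]
    unfolding lincomb_shift M_def m1'_def m2'_def by simp
qed

lemma independent_mod_coeff_self:
  assumes indep: "independent_mod x P" and P: "1 < P" and eq: "x n = lincomb x N m"
  shows "m n mod P = 1"
proof -
  define M where "M = max N (Suc n)"
  have "lincomb x M (\<lambda>i. if i < Suc n then if i = n then 1 else 0 else 0) = x n"
    using lincomb_pad[of "Suc n" M x "\<lambda>l. if l = n then 1 else 0"] lincomb_unit[of x n]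
    unfolding M_def by simp
  also have "\<dots> = lincomb x M (\<lambda>i. if i < N then m i else 0)"
    using lincomb_pad[of N M x m] eq unfolding M_def by simp
  finally have "lincomb x M (\<lambda>i. if i < Suc n then if i = n then 1 else 0 else 0)
    = lincomb x M (\<lambda>i. if i < N then m i else 0)" .
  moreover have "0 < P" "n < M"
    using P unfolding M_def by simp_all
  ultimately have "(if n < Suc n then if n = n then 1 else 0 else 0) mod P = (if n < N then m n else 0) mod P"
    using independent_mod_coeff_eq[OF indep] by blast
  then show ?thesis
    using P by (cases "n < N") simp_all
qed

lemma exists_shift_endomorphism:
  assumes indep: "independent_mod x P" and P: "0 < P" and \<rho>: "retraction \<rho> (nat_span x)"
  obtains f where "additive_map f" "\<And>N m. f (lincomb x N m) = lincomb x (Suc N) (case_nat 0 m)"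
    "\<And>g. \<exists>N m. f g = lincomb x (Suc N) (case_nat 0 m)"
proof -
  define sh where "sh a = (SOME b. \<exists>N m. a = lincomb x N m \<and> b = lincomb x (Suc N) (case_nat 0 m))" for a
  have sh: "sh (lincomb x N m) = lincomb x (Suc N) (case_nat 0 m)" for N m
  proof -
    have "\<exists>N' m'. lincomb x N m = lincomb x N' m' \<and> sh (lincomb x N m) = lincomb x (Suc N') (case_nat 0 m')"
      unfolding sh_def by (rule someI_ex) blast
    then show ?thesis
      using independent_mod_shift_eq[OF indep P] by metis
  qed
  have \<rho>_add: "additive_map \<rho>" and \<rho>_id: "\<And>a. a \<in> nat_span x \<Longrightarrow> \<rho> a = a"
    and \<rho>_range: "\<And>g. \<rho> g \<in> nat_span x"
    using \<rho> unfolding retraction_def by blast+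
  define f where "f g = sh (\<rho> g)" for g
  have f_lincomb: "f (lincomb x N m) = lincomb x (Suc N) (case_nat 0 m)" for N m
  proof -
    have "lincomb x N m \<in> nat_span x"
      unfolding nat_span_def by blast
    then show ?thesis
      unfolding f_def by (simp add: \<rho>_id sh)
  qed
  have "additive_map f"
    unfolding additive_map_def
  proof (intro allI)
    fix a b
    obtain N m1 m2 where e: "\<rho> a = lincomb x N m1" "\<rho> b = lincomb x N m2"
      using nat_span_common[OF \<rho>_range \<rho>_range] by blast
    have "case_nat 0 (\<lambda>i. m1 i + m2 i) = (\<lambda>i. case_nat 0 m1 i + case_nat 0 m2 i)"
      by (rule ext) (simp split: nat.split)
    then show "f (a + b) = f a + f b"
      unfolding f_def additive_map_add[OF \<rho>_add] e lincomb_add sh by simp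
  qed
  moreover have "\<exists>N m. f g = lincomb x (Suc N) (case_nat 0 m)" for g
  proof -
    obtain N m where "\<rho> g = lincomb x N m"
      using \<rho>_range[of g] unfolding nat_span_def by blast
    then show ?thesis
      unfolding f_def using sh by metis
  qed
  ultimately show ?thesis
    using f_lincomb that by blast
qed

lemma not_strongly_co_Hopfian_if_independent_summand:
  fixes x :: "nat \<Rightarrow> 'a::ab_group_add"
  assumes indep: "independent_mod x P" and P: "1 < P" and \<rho>: "retraction \<rho> (nat_span x)"
  shows "\<not> strongly_co_Hopfian TYPE('a)"
proof
  assume sch: "strongly_co_Hopfian TYPE('a)"
  have "0 < P"
    using P by simp
  obtain f where f_add: "additive_map f"
    and f_lincomb: "\<And>N m. f (lincomb x N m) = lincomb x (Suc N) (case_nat 0 m)"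
    and f_range: "\<And>g. \<exists>N m. f g = lincomb x (Suc N) (case_nat 0 m)"
    using exists_shift_endomorphism[OF indep \<open>0 < P\<close> \<rho>] by blast
  define e where "e i l = (if l = i then 1 else 0 :: nat)" for i l :: nat
  have unit: "lincomb x (Suc i) (e i) = x i" for i
    unfolding e_def by (rule lincomb_unit)
  have "f (x i) = x (Suc i)" for i
  proof -
    have "case_nat 0 (e i) = e (Suc i)"
      by (rule ext) (simp add: e_def split: nat.split)
    then show ?thesis
      using f_lincomb[of "Suc i" "e i"] unit[of i] unit[of "Suc i"] by simp
  qed
  then have orbit: "(f ^^ n) (x 0) = x n" for n
    by (induction n) auto
  have shifted: "\<exists>N m. (f ^^ Suc n) g = lincomb x N m \<and> (\<forall>i\<le>n. m i = 0)" for n g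
  proof (induction n)
    case 0
    obtain N m where "f g = lincomb x (Suc N) (case_nat 0 m)"
      using f_range by blast
    then show ?case
      by (intro exI[of _ "Suc N"] exI[of _ "case_nat 0 m"]) simp
  next
    case (Suc n)
    then obtain N m where "(f ^^ Suc n) g = lincomb x N m" "\<forall>i\<le>n. m i = 0"
      by blast
    then have "(f ^^ Suc (Suc n)) g = lincomb x (Suc N) (case_nat 0 m)" "\<forall>i\<le>Suc n. case_nat 0 m i = 0"
      using f_lincomb by (auto split: nat.split)
    then show ?case
      by blast
  qed
  have "x n \<notin> range (f ^^ Suc n)" for n
  proof
    assume "x n \<in> range (f ^^ Suc n)"
    then obtain g where "x n = (f ^^ Suc n) g"
      by blast
    then obtain N m where "x n = lincomb x N m" "m n = 0"
      using shifted[of n g] by auto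
    then show False
      using independent_mod_coeff_self[OF indep P] by fastforce
  qed
  moreover obtain n where "range (f ^^ n) = range (f ^^ Suc n)"
    using sch f_add unfolding strongly_co_Hopfian_def by blast
  moreover have "x n \<in> range (f ^^ n)"
    using rangeI[of "f ^^ n" "x 0"] unfolding orbit .
  ultimately show False
    by blast
qed

section \<open>Strongly co-Hopfian reduced groups have finite primary components\<close>

lemma finite_translates_by_multiples:
  assumes "finite V" "nmul p y = 0" "0 < p"
  shows "finite {v + nmul c y | v c. v \<in> V}"
proof -
  have "{v + nmul c y | v c. v \<in> V} \<subseteq> (\<lambda>(v, c). v + nmul c y) ` (V \<times> {..<p})"
  proof
    fix z assume "z \<in> {v + nmul c y | v c. v \<in> V}"
    then obtain v c where "v \<in> V" "z = v + nmul c y"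
      by blast
    moreover have "nmul c y = nmul (c mod p) y" "c mod p < p"
      using nmul_mod[OF assms(2)] assms(3) by simp_all
    ultimately show "z \<in> (\<lambda>(v, c). v + nmul c y) ` (V \<times> {..<p})"
      by force
  qed
  then show ?thesis
    using finite_subset assms(1) by blast
qed

lemma exists_sequence_avoiding_combinations:
  fixes X W :: "'a::ab_group_add set"
  assumes X: "infinite X" and W: "finite W" and p: "0 < p"
    and killed: "\<And>y. y \<in> X \<Longrightarrow> nmul p y = 0"
  shows "\<exists>s. \<forall>n. s n \<in> X \<and> (\<forall>m. \<forall>w\<in>W. s n \<noteq> lincomb s n m + w)"
proof -
  define step where "step V y = {v + nmul c y | v c. v \<in> V}" for V and y :: 'a
  have finite_step: "finite (step V y)" if "finite V" "y \<in> X" for V y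
    using finite_translates_by_multiples[OF that(1) killed[OF that(2)] p] unfolding step_def .
  have avoid: "\<exists>y. y \<in> X \<and> y \<notin> V" if "finite V" for V
    using Diff_infinite_finite[OF that X] by (metis Diff_iff finite.emptyI ex_in_conv)
  define P where "P n Vy \<longleftrightarrow> finite (fst Vy) \<and> snd Vy \<in> X \<and> snd Vy \<notin> fst Vy \<and> (n = 0 \<longrightarrow> fst Vy = W)"
    for n :: nat and Vy :: "'a set \<times> 'a"
  have "\<exists>Vy. P 0 Vy"
  proof -
    obtain y where "y \<in> X" "y \<notin> W"
      using avoid[OF W] by blast
    then have "P 0 (W, y)"
      unfolding P_def using W by simp
    then show ?thesis ..
  qed
  moreover have "\<exists>Vy'. P (Suc n) Vy' \<and> fst Vy' = step (fst Vy) (snd Vy)" if "P n Vy" for n Vy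
  proof -
    have "finite (step (fst Vy) (snd Vy))"
      using that finite_step unfolding P_def by blast
    moreover obtain y' where "y' \<in> X" "y' \<notin> step (fst Vy) (snd Vy)"
      using avoid[OF calculation] by blast
    ultimately have "P (Suc n) (step (fst Vy) (snd Vy), y')"
      unfolding P_def by simp
    then show ?thesis
      by fastforce
  qed
  ultimately obtain F where F: "\<And>n. P n (F n)" "\<And>n. fst (F (Suc n)) = step (fst (F n)) (snd (F n))"
    using dependent_nat_choice[of P "\<lambda>n Vy Vy'. fst Vy' = step (fst Vy) (snd Vy)"] by blast
  define s where "s n = snd (F n)" for n
  have "lincomb s n m + w \<in> fst (F n)" if "w \<in> W" for n m w
  proof (induction n)
    case 0
    have "fst (F 0) = W"
      using F(1)[of 0] unfolding P_def by blast
    then show ?case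
      using that by simp
  next
    case (Suc n)
    have "lincomb s (Suc n) m + w = (lincomb s n m + w) + nmul (m n) (s n)"
      by (simp add: lincomb_Suc algebra_simps)
    then show ?case
      using Suc unfolding F(2) step_def s_def by blast
  qed
  moreover have "s n \<in> X" "s n \<notin> fst (F n)" for n
    using F(1)[of n] unfolding P_def s_def by blast+
  ultimately show ?thesis
    by metis
qed

lemma socle_sequence_independent:
  assumes p: "prime p" and Q: "subgrp Q" and killed: "\<And>n. nmul p (s n) = 0"
    and avoid: "\<And>n m w. w \<in> Q \<Longrightarrow> nmul p w = 0 \<Longrightarrow> s n \<noteq> lincomb s n m + w"
  shows "lincomb s n d \<in> Q \<Longrightarrow> i < n \<Longrightarrow> p dvd d i"
proof (induction n arbitrary: i)
  case 0
  then show ?case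
    by simp
next
  case (Suc n)
  have Y: "lincomb s n d + nmul (d n) (s n) \<in> Q" (is "?X + _ \<in> Q")
    using Suc.prems(1) by (simp add: lincomb_Suc)
  have "p dvd d n"
  proof (rule ccontr)
    assume "\<not> p dvd d n"
    then have "coprime (d n) p"
      using prime_imp_coprime[OF p] coprime_commute by blast
    then obtain v where v: "nmul (d n * v) (s n) = s n"
      using nmul_inverse[OF killed] by blast
    have "nmul v (nmul (d n) (s n)) = s n"
      using v by (metis mult.commute nmul_mult)
    then have "s n = nmul v (?X + nmul (d n) (s n)) - nmul v ?X"
      by (simp add: nmul_add_right)
    also have "\<dots> = lincomb s n (\<lambda>i. (p - 1) * (v * d i)) + nmul v (?X + nmul (d n) (s n))"
      using neg_lincomb[OF killed prime_gt_0_nat[OF p]] by (simp add: lincomb_nmul)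
    finally have "s n = lincomb s n (\<lambda>i. (p - 1) * (v * d i)) + nmul v (?X + nmul (d n) (s n))" .
    moreover have "nmul p (?X + nmul (d n) (s n)) = 0"
      using lincomb_killed[of p s "Suc n" d] killed by (simp add: lincomb_Suc)
    then have "nmul p (nmul v (?X + nmul (d n) (s n))) = 0"
      by (metis mult.commute nmul_mult nmul_zero)
    ultimately show False
      using avoid[OF subgrp_nmul[OF Q Y]] by blast
  qed
  moreover have "nmul (d n) (s n) = 0"
    using nmul_eq_0_dvd[OF killed \<open>p dvd d n\<close>] .
  then have "lincomb s n d \<in> Q"
    using Y by simp
  then have "\<And>i. i < n \<Longrightarrow> p dvd d i"
    by (rule Suc.IH)
  ultimately show ?case
    using Suc.prems(2) less_Suc_eq by auto
qed

lemma lifted_sequence_independent: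
  assumes p: "prime p" and lift: "\<And>i. nmul (p ^ j) (x i) = s i"
    and indep: "\<And>n d i. lincomb s n d \<in> range (nmul (p ^ Suc j)) \<Longrightarrow> i < n \<Longrightarrow> p dvd d i"
    and mem: "lincomb x N m \<in> range (nmul (p ^ Suc j))" and i: "i < N"
  shows "p ^ Suc j dvd m i"
proof -
  have Q: "subgrp (range (nmul (p ^ Suc j)))"
    by (rule subgrp_range[OF additive_map_nmul_map])
  have "r \<le> Suc j \<Longrightarrow> \<forall>i<N. p ^ r dvd m i" for r
  proof (induction r)
    case 0
    then show ?case
      by simp
  next
    case (Suc r)
    then have r: "r \<le> j" and IH: "\<forall>i<N. p ^ r dvd m i"
      by simp_all
    define m' where "m' i = m i div p ^ r" for i
    have m: "m i = p ^ r * m' i" if "i < N" for i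
      using IH that unfolding m'_def by simp
    have "nmul (p ^ (j - r)) (lincomb x N m) = lincomb s N m'"
      unfolding lincomb_def nmul_sum
    proof (rule sum.cong)
      fix i assume "i \<in> {..<N}"
      then have "p ^ (j - r) * m i = m' i * p ^ j"
        using m r by (simp add: power_add[symmetric] algebra_simps)
      then show "nmul (p ^ (j - r)) (nmul (m i) (x i)) = nmul (m' i) (s i)"
        by (metis lift nmul_mult)
    qed simp
    then have "lincomb s N m' \<in> range (nmul (p ^ Suc j))"
      using subgrp_nmul[OF Q mem] by metis
    then have "\<forall>i<N. p dvd m' i"
      using indep by blast
    then show ?case
      using m by (simp add: mult_dvd_mono)
  qed
  then show ?thesis
    using i by blast
qed

lemma retraction_onto_nat_span:
  assumes p: "prime p" and e: "0 < e" and killed: "\<And>i. nmul (p ^ e) (x i) = 0"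
    and indep: "\<And>N m i. lincomb x N m \<in> range (nmul (p ^ e)) \<Longrightarrow> i < N \<Longrightarrow> p ^ e dvd m i"
  shows "\<exists>\<rho>. retraction \<rho> (nat_span x)"
proof (rule retraction_onto_homogeneous[OF subgrp_nat_span[OF killed] p e])
  show "0 < p ^ e"
    using prime_gt_0_nat[OF p] by simp
  show "nmul (p ^ e) a = 0" if "a \<in> nat_span x" for a
    using that lincomb_killed[of "p ^ e" x, OF killed] unfolding nat_span_def by blast
  show "nat_span x \<inter> range (nmul (p ^ e)) \<subseteq> {0}"
  proof
    fix a assume a: "a \<in> nat_span x \<inter> range (nmul (p ^ e))"
    then obtain N m where "a = lincomb x N m"
      unfolding nat_span_def by blast
    moreover have "lincomb x N m \<in> range (nmul (p ^ e))"
      using a by (simp add: \<open>a = lincomb x N m\<close>[symmetric])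
    then have "nmul (m i) (x i) = 0" if "i < N" for i
      using nmul_eq_0_dvd[OF killed indep[OF _ that]] by blast
    ultimately show "a \<in> {0}"
      by (simp add: lincomb_def)
  qed
  show "\<exists>a'\<in>nat_span x. a = nmul p a'"
    if a: "a \<in> nat_span x" "nmul (p ^ (e - 1)) a = 0" for a
  proof -
    obtain N m where m: "a = lincomb x N m"
      using a(1) unfolding nat_span_def by blast
    have "0 \<in> range (nmul (p ^ e))"
      by (rule range_eqI[where x = 0]) simp
    then have "lincomb x N (\<lambda>i. p ^ (e - 1) * m i) \<in> range (nmul (p ^ e))"
      using a(2) unfolding m lincomb_nmul by simp
    then have "p ^ e dvd p ^ (e - 1) * m i" if "i < N" for i
      using indep that by blast
    then have "p ^ (e - 1) * p dvd p ^ (e - 1) * m i" if "i < N" for i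
      using that power_minus_mult[OF e, of p] by metis
    then have "p dvd m i" if "i < N" for i
      using that prime_gt_0_nat[OF p] by (simp add: nat_mult_dvd_cancel_disj)
    then have "lincomb x N (\<lambda>i. p * (m i div p)) = a"
      unfolding m lincomb_def by (intro sum.cong) simp_all
    then have "a = nmul p (lincomb x N (\<lambda>i. m i div p))"
      by (simp add: lincomb_nmul)
    then show ?thesis
      unfolding nat_span_def by blast
  qed
qed

lemma strongly_co_Hopfian_nmul_range:
  assumes "strongly_co_Hopfian TYPE('a::ab_group_add)"
  obtains k where "range (nmul (n ^ k) :: 'a \<Rightarrow> 'a) = range (nmul (n ^ Suc k))"
proof -
  obtain k where "range (nmul n ^^ k :: 'a \<Rightarrow> 'a) = range (nmul n ^^ Suc k)"
    using assms additive_map_nmul_map unfolding strongly_co_Hopfian_def by blast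
  then show ?thesis
    using that unfolding funpow_nmul by blast
qed

lemma strongly_co_Hopfian_divisible_mod_torsion:
  assumes sch: "strongly_co_Hopfian TYPE('a::ab_group_add)" and n: "0 < n"
  shows "\<exists>y. nmul n y - (g :: 'a) \<in> torsion_part"
proof -
  obtain k where k: "range (nmul (n ^ k) :: 'a \<Rightarrow> 'a) = range (nmul (n ^ Suc k))"
    using strongly_co_Hopfian_nmul_range[OF sch] by blast
  have "nmul (n ^ k) g \<in> range (nmul (n ^ Suc k))"
    unfolding k[symmetric] by (rule rangeI)
  then obtain y where "nmul (n ^ k) g = nmul (n ^ Suc k) y"
    by blast
  also have "\<dots> = nmul (n ^ k) (nmul n y)"
    by (rule nmul_power_Suc)
  finally have "nmul (n ^ k) (nmul n y - g) = 0"
    by (simp add: nmul_diff)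
  moreover have "0 < n ^ k"
    using n by simp
  ultimately show ?thesis
    unfolding torsion_part_def by blast
qed

lemma divisible_if_p_divisible:
  assumes p: "prime p" and D: "subgrp D" "D \<subseteq> ppart p"
    and p_div: "\<And>x. x \<in> D \<Longrightarrow> \<exists>y\<in>D. nmul p y = x"
  shows "divisible_subgrp D"
proof -
  have "\<forall>x\<in>D. \<exists>y\<in>D. nmul n y = x" if "0 < n" for n
    using that
  proof (induction n rule: less_induct)
    case (less n)
    show ?case
    proof (cases "p dvd n")
      case True
      then obtain n' where n': "n = p * n'"
        by blast
      then have "0 < n'" "n' < n"
        using less.prems prime_gt_1_nat[OF p] by auto
      then show ?thesis
        using less.IH p_div n' by (metis nmul_mult)
    next
      case False
      show ?thesis
      proof
        fix x assume x: "x \<in> D"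
        obtain a where "nmul (p ^ a) x = 0"
          using x D(2) unfolding ppart_def by blast
        moreover have "coprime n (p ^ a)"
          using prime_imp_coprime[OF p False] by (simp add: coprime_commute)
        ultimately obtain v where "nmul (n * v) x = x"
          using nmul_inverse by blast
        then show "\<exists>y\<in>D. nmul n y = x"
          using subgrp_nmul[OF D(1) x] by (metis nmul_mult)
      qed
    qed
  qed
  then show ?thesis
    unfolding divisible_subgrp_def using D(1) by blast
qed

lemma strongly_co_Hopfian_ppart_disjoint:
  assumes sch: "strongly_co_Hopfian TYPE('a::ab_group_add)" and red: "reduced_grp TYPE('a)"
    and p: "prime p"
  obtains k where "ppart p \<inter> range (nmul (p ^ k) :: 'a \<Rightarrow> 'a) \<subseteq> {0}"
proof -
  obtain k where k: "range (nmul (p ^ k) :: 'a \<Rightarrow> 'a) = range (nmul (p ^ Suc k))"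
    using strongly_co_Hopfian_nmul_range[OF sch] by blast
  define D where "D = ppart p \<inter> range (nmul (p ^ k) :: 'a \<Rightarrow> 'a)"
  have D: "subgrp D" "D \<subseteq> ppart p"
    unfolding D_def using subgrp_Int[OF subgrp_ppart subgrp_range[OF additive_map_nmul_map]] by auto
  have "\<exists>y\<in>D. nmul p y = x" if x: "x \<in> D" for x
  proof -
    obtain z where z: "x = nmul (p ^ Suc k) z"
      using x k unfolding D_def by auto
    obtain a where a: "nmul (p ^ a) x = 0"
      using x unfolding D_def ppart_def by blast
    have "nmul p (nmul (p ^ k) z) = x"
      using z by (simp add: nmul_mult[symmetric])
    moreover have "nmul (p ^ Suc a) (nmul (p ^ k) z) = 0"
      using a calculation by (simp only: nmul_power_Suc)
    ultimately show ?thesis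
      unfolding D_def ppart_def by blast
  qed
  then have "divisible_subgrp D"
    using divisible_if_p_divisible[OF p D] by blast
  then have "D = {0}"
    using red unfolding reduced_grp_def by blast
  then show ?thesis
    using that unfolding D_def by blast
qed

lemma finite_ppart_if_finite_socle:
  assumes bounded: "\<And>t :: 'a::ab_group_add. t \<in> ppart p \<Longrightarrow> nmul (p ^ k) t = 0"
    and socle: "finite {x :: 'a. nmul p x = 0}"
  shows "finite (ppart p :: 'a set)"
proof -
  have fibre: "finite {x :: 'a. nmul p x = y}" for y
  proof (cases "\<exists>x0. nmul p x0 = y")
    case True
    then obtain x0 where x0: "nmul p x0 = y"
      by blast
    have "{x. nmul p x = y} \<subseteq> (\<lambda>z. x0 + z) ` {x. nmul p x = 0}"
    proof
      fix x assume "x \<in> {x. nmul p x = y}"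
      then have "nmul p (x - x0) = 0"
        using x0 by (simp add: nmul_diff)
      moreover have "x = x0 + (x - x0)"
        by simp
      ultimately show "x \<in> (\<lambda>z. x0 + z) ` {x. nmul p x = 0}"
        by blast
    qed
    then show ?thesis
      using socle finite_subset by blast
  qed simp
  have "finite {x :: 'a. nmul (p ^ i) x = 0}" for i
  proof (induction i)
    case (Suc i)
    have "{x :: 'a. nmul (p ^ Suc i) x = 0} \<subseteq> (\<Union>y\<in>{x. nmul (p ^ i) x = 0}. {x. nmul p x = y})"
      by (auto simp del: power_Suc simp: nmul_power_Suc)
    moreover have "finite (\<Union>y\<in>{x. nmul (p ^ i) x = 0}. {x :: 'a. nmul p x = y})"
      using Suc fibre by (intro finite_UN_I)
    ultimately show ?case
      by (rule finite_subset)
  qed simp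
  moreover have "ppart p \<subseteq> {x :: 'a. nmul (p ^ k) x = 0}"
    using bounded by blast
  ultimately show ?thesis
    using finite_subset by blast
qed

lemma exists_last_infinite:
  assumes "infinite (L 0)" "finite (L k)"
  shows "\<exists>j. infinite (L j) \<and> finite (L (Suc j))"
  using assms by (induction k) auto

lemma exists_socle_layer:
  assumes infinite: "infinite (ppart p :: 'a::ab_group_add set)"
    and disjoint: "ppart p \<inter> range (nmul (p ^ k) :: 'a \<Rightarrow> 'a) \<subseteq> {0}"
  obtains j where "infinite ({x :: 'a. nmul p x = 0} \<inter> range (nmul (p ^ j)))"
    "finite ({x :: 'a. nmul p x = 0} \<inter> range (nmul (p ^ Suc j)))"
proof -
  define layer where "layer i = {x :: 'a. nmul p x = 0} \<inter> range (nmul (p ^ i))" for i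
  have "nmul (p ^ k) t = 0" if "t \<in> ppart p" for t :: 'a
    using disjoint subgrp_nmul[OF subgrp_ppart that] by blast
  then have "infinite {x :: 'a. nmul p x = 0}"
    using finite_ppart_if_finite_socle infinite by blast
  moreover have "range (nmul (p ^ 0) :: 'a \<Rightarrow> 'a) = UNIV"
    by (simp add: surj_def)
  ultimately have "infinite (layer 0)"
    unfolding layer_def by simp
  moreover have "{x :: 'a. nmul p x = 0} \<subseteq> ppart p"
  proof
    fix x :: 'a assume "x \<in> {x. nmul p x = 0}"
    then have "nmul (p ^ 1) x = 0"
      by simp
    then show "x \<in> ppart p"
      unfolding ppart_def by blast
  qed
  then have "layer k \<subseteq> {0}"
    using disjoint unfolding layer_def by blast
  then have "finite (layer k)"
    using finite_subset by blast
  ultimately obtain j where "infinite (layer j)" "finite (layer (Suc j))"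
    using exists_last_infinite by blast
  then show ?thesis
    using that unfolding layer_def by blast
qed

theorem strongly_co_Hopfian_finite_ppart:
  assumes sch: "strongly_co_Hopfian TYPE('a::ab_group_add)" and red: "reduced_grp TYPE('a)"
    and p: "prime p"
  shows "finite (ppart p :: 'a set)"
proof (rule ccontr)
  assume "infinite (ppart p :: 'a set)"
  moreover obtain k where "ppart p \<inter> range (nmul (p ^ k) :: 'a \<Rightarrow> 'a) \<subseteq> {0}"
    using strongly_co_Hopfian_ppart_disjoint[OF sch red p] by blast
  ultimately obtain j where
    j: "infinite ({x :: 'a. nmul p x = 0} \<inter> range (nmul (p ^ j)))"
      "finite ({x :: 'a. nmul p x = 0} \<inter> range (nmul (p ^ Suc j)))"
    by (rule exists_socle_layer)
  define layer where "layer i = {x :: 'a. nmul p x = 0} \<inter> range (nmul (p ^ i))" for i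
  text \<open>A sequence in the socle layer \<open>G[p] \<inter> p\<^sup>j G\<close> that is independent modulo \<open>p\<^sup>j\<^sup>+\<^sup>1 G\<close>,
    lifted to elements of order \<open>p\<^sup>j\<^sup>+\<^sup>1\<close>, spans a summand \<open>\<oplus> \<int>/p\<^sup>j\<^sup>+\<^sup>1\<close> of \<open>G\<close>.\<close>
  obtain s where s_layer: "\<And>n. s n \<in> layer j"
    and s_avoid: "\<And>n m w. w \<in> layer (Suc j) \<Longrightarrow> s n \<noteq> lincomb s n m + w"
    using exists_sequence_avoiding_combinations[OF j prime_gt_0_nat[OF p]] unfolding layer_def by blast
  have indep_s: "p dvd d i" if "lincomb s n d \<in> range (nmul (p ^ Suc j))" "i < n" for n d i
    using socle_sequence_independent[OF p subgrp_range[OF additive_map_nmul_map], of s] s_layer s_avoid that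
    unfolding layer_def by blast
  have "\<forall>i. \<exists>y. nmul (p ^ j) y = s i"
    using s_layer unfolding layer_def by (metis IntD2 rangeE)
  then obtain x where x: "\<And>i. nmul (p ^ j) (x i) = s i"
    by metis
  have killed: "nmul (p ^ Suc j) (x i) = 0" for i
    using s_layer[of i] x[of i] unfolding layer_def by (simp add: nmul_mult)
  have indep_x: "p ^ Suc j dvd m i" if "lincomb x N m \<in> range (nmul (p ^ Suc j))" "i < N" for N m i
    using lifted_sequence_independent[of p j x s N m i] p x indep_s that by blast
  have "independent_mod x (p ^ Suc j)"
    unfolding independent_mod_def using killed indep_x range_eqI[of 0 "nmul (p ^ Suc j)" 0]
    by (metis nmul_zero)
  moreover have "1 < p ^ Suc j"
    using one_less_power[OF prime_gt_1_nat[OF p]] by blast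
  moreover obtain \<rho> where "retraction \<rho> (nat_span x)"
    using retraction_onto_nat_span[of p "Suc j" x] p killed indep_x by blast
  ultimately show False
    using not_strongly_co_Hopfian_if_independent_summand sch by blast
qed

section \<open>Embedding into the product of the primary components\<close>

lemma sumT_if_support_dvd:
  assumes "h \<in> prodT" "0 < M" "\<And>p. \<not> p dvd M \<Longrightarrow> h p = 0"
  shows "h \<in> sumT"
proof -
  have "{p. h p \<noteq> 0} \<subseteq> {p. p dvd M}"
    using assms(3) by blast
  then have "finite {p. h p \<noteq> 0}"
    using finite_divisors_nat[OF assms(2)] finite_subset by blast
  then show ?thesis
    unfolding sumT_def using assms(1) by simp
qed

lemma subgrp_prodT: "subgrp prodT"
  unfolding subgrp_def prodT_def
  by (auto simp: subgrp_0[OF subgrp_ppart] subgrp_add[OF subgrp_ppart] subgrp_neg[OF subgrp_ppart])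

locale ppart_projections =
  fixes R :: "nat \<Rightarrow> 'a::ab_group_add \<Rightarrow> 'a"
  assumes retraction_R: "prime p \<Longrightarrow> retraction (R p) (ppart p)"
begin

lemma additive_R: "prime p \<Longrightarrow> additive_map (R p)"
  using retraction_R unfolding retraction_def by blast

lemma R_id: "prime p \<Longrightarrow> y \<in> ppart p \<Longrightarrow> R p y = y"
  using retraction_R unfolding retraction_def by blast

lemma R_in_ppart: "prime p \<Longrightarrow> R p y \<in> ppart p"
  using retraction_R unfolding retraction_def by blast

lemma R_eq_0_if_coprime:
  assumes p: "prime p" and "nmul M y = 0" "\<not> p dvd M"
  shows "R p y = 0"
proof -
  have "nmul M (R p y) = 0"
    using assms(2) additive_map_nmul[OF additive_R[OF p]] additive_map_0[OF additive_R[OF p]] by metis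
  then show ?thesis
    using ppart_eq_0_if_coprime[OF p R_in_ppart[OF p] _ assms(3)] by blast
qed

lemma R_R:
  assumes p: "prime p" and q: "prime q"
  shows "R p (R q y) = (if q = p then R p y else 0)"
proof (cases "q = p")
  case True
  then show ?thesis
    using R_id[OF p R_in_ppart[OF p]] by simp
next
  case False
  obtain a where "nmul (q ^ a) (R q y) = 0"
    using R_in_ppart[OF q] unfolding ppart_def by blast
  moreover have "\<not> p dvd q ^ a"
    using p q False by (metis prime_dvd_power primes_dvd_imp_eq)
  ultimately show ?thesis
    using R_eq_0_if_coprime[OF p] False by simp
qed

lemma R_sum_R:
  assumes "finite F" "\<And>q. q \<in> F \<Longrightarrow> prime q" "prime p"
  shows "R p (\<Sum>q\<in>F. R q (y q)) = (if p \<in> F then R p (y p) else 0)"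
proof -
  have "R p (\<Sum>q\<in>F. R q (y q)) = (\<Sum>q\<in>F. if q = p then R p (y p) else 0)"
    unfolding additive_map_sum[OF additive_R[OF assms(3)]] using R_R assms(2,3) by (intro sum.cong) auto
  then show ?thesis
    using assms(1) by simp
qed

lemma torsion_eq_0_if_R_eq_0:
  assumes "nmul M w = 0" "0 < M" "\<And>p. prime p \<Longrightarrow> R p w = 0"
  shows "w = 0"
  using assms
proof (induction M arbitrary: w rule: less_induct)
  case (less M)
  show ?case
  proof (cases "M = 1")
    case False
    then obtain q where q: "prime q" "q dvd M"
      using prime_factor_nat by blast
    then obtain M' where M: "M = q * M'"
      by blast
    then have "0 < M'" "M' < M"
      using less.prems(2) prime_gt_1_nat[OF q(1)] by auto
    have "nmul (q ^ 1) (nmul M' w) = 0"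
      using less.prems(1) M by (simp add: nmul_mult)
    then have "nmul M' w \<in> ppart q"
      unfolding ppart_def by blast
    then have "nmul M' w = R q (nmul M' w)"
      using R_id[OF q(1)] by simp
    also have "\<dots> = 0"
      using additive_map_nmul[OF additive_R[OF q(1)]] less.prems(3)[OF q(1)] by simp
    finally show ?thesis
      using less.IH[OF \<open>M' < M\<close> _ \<open>0 < M'\<close> less.prems(3)] by blast
  qed (use less.prems in simp)
qed

definition embed :: "'a \<Rightarrow> nat \<Rightarrow> 'a" where
  "embed g = (\<lambda>q. if prime q then R q g else 0)"

lemma additive_embed: "additive_map embed"
  unfolding additive_map_def embed_def using additive_map_add[OF additive_R] by auto

lemma embed_in_prodT: "embed g \<in> prodT"
  unfolding prodT_def embed_def using R_in_ppart by simp

lemma embed_eq_0_iff: "embed g = 0 \<longleftrightarrow> (\<forall>p. prime p \<longrightarrow> R p g = 0)"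
  unfolding embed_def by (auto simp: fun_eq_iff)

lemma embed_torsion_in_sumT:
  assumes "t \<in> torsion_part"
  shows "embed t \<in> sumT"
proof -
  obtain M where M: "0 < M" "nmul M t = 0"
    using assms unfolding torsion_part_def by blast
  show ?thesis
    by (rule sumT_if_support_dvd[OF embed_in_prodT M(1)])
      (auto simp: embed_def intro: R_eq_0_if_coprime[OF _ M(2)])
qed

lemma sumT_subset_embed_torsion:
  assumes h: "h \<in> sumT"
  shows "\<exists>t\<in>torsion_part. embed t = h"
proof -
  define F where "F = {p. h p \<noteq> 0}"
  have h_ppart: "prime p \<Longrightarrow> h p \<in> ppart p" and h_0: "\<not> prime p \<Longrightarrow> h p = 0" for p
    using h unfolding sumT_def prodT_def by auto
  have F: "finite F" "\<And>q. q \<in> F \<Longrightarrow> prime q"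
    using h h_0 unfolding sumT_def F_def by auto
  have h_R: "R q (h q) = h q" if "q \<in> F" for q
    using R_id F(2) h_ppart that by blast
  define t where "t = (\<Sum>q\<in>F. h q)"
  have "t \<in> torsion_part"
    unfolding t_def using F(2) h_ppart ppart_subset_torsion_part by (intro subgrp_sum[OF subgrp_torsion_part]) blast
  moreover have "embed t = h"
  proof
    fix p
    have "t = (\<Sum>q\<in>F. R q (h q))"
      unfolding t_def using h_R by simp
    then have "R p t = (if p \<in> F then R p (h p) else 0)" if "prime p"
      using R_sum_R[OF F that] by simp
    then show "embed t p = h p"
      unfolding embed_def using h_R h_0 unfolding F_def by auto
  qed
  ultimately show ?thesis
    by blast
qed

lemma kernel_lift_mod_torsion:
  assumes y: "nmul n y - g \<in> torsion_part" and n: "0 < n" and g: "\<And>p. prime p \<Longrightarrow> R p g = 0"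
  obtains y' where "\<And>p. prime p \<Longrightarrow> R p y' = 0" "nmul n y' - g \<in> torsion_part"
proof -
  obtain M where M: "0 < M" "nmul M (nmul n y - g) = 0"
    using y unfolding torsion_part_def by blast
  define F where "F = {q. prime q \<and> q dvd n * M}"
  have F: "finite F" "\<And>q. q \<in> F \<Longrightarrow> prime q"
    using finite_divisors_nat[of "n * M"] n M(1) unfolding F_def by (auto intro: finite_subset)
  text \<open>\<open>y\<close> is corrected by its components at the finitely many primes dividing \<open>n M\<close>.\<close>
  define y' where "y' = y - (\<Sum>q\<in>F. R q y)"
  have R_y: "R p y = 0" if p: "prime p" "p \<notin> F" for p
  proof -
    have nd: "\<not> p dvd n" "\<not> p dvd M"
      using p unfolding F_def by (auto simp: dvd_mult dvd_mult2)
    have "nmul n (R p y) = R p (nmul n y - g)"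
      using g[OF p(1)] by (simp add: additive_map_diff[OF additive_R[OF p(1)]] additive_map_nmul[OF additive_R[OF p(1)]])
    also have "\<dots> = 0"
      using R_eq_0_if_coprime[OF p(1) M(2) nd(2)] .
    finally show ?thesis
      using ppart_eq_0_if_coprime[OF p(1) R_in_ppart[OF p(1)] _ nd(1)] by blast
  qed
  have R_y': "R p y' = 0" if p: "prime p" for p
    unfolding y'_def additive_map_diff[OF additive_R[OF p]] using R_sum_R[OF F p, of "\<lambda>_. y"] R_y p by simp
  have "(\<Sum>q\<in>F. R q y) \<in> torsion_part"
  proof (rule subgrp_sum[OF subgrp_torsion_part])
    fix q assume "q \<in> F"
    then show "R q y \<in> torsion_part"
      using ppart_subset_torsion_part[OF F(2)] R_in_ppart[OF F(2)] by blast
  qed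
  then have "(nmul n y - g) - nmul n (\<Sum>q\<in>F. R q y) \<in> torsion_part"
    using subgrp_diff[OF subgrp_torsion_part y subgrp_nmul[OF subgrp_torsion_part]] by blast
  moreover have "(nmul n y - g) - nmul n (\<Sum>q\<in>F. R q y) = nmul n y' - g"
    unfolding y'_def by (simp add: nmul_diff)
  ultimately have "nmul n y' - g \<in> torsion_part"
    by simp
  with R_y' show ?thesis
    by (rule that)
qed

lemma divisible_kernel_embed:
  assumes sch: "strongly_co_Hopfian TYPE('a)"
  shows "divisible_subgrp {g. embed g = 0}"
  unfolding divisible_subgrp_def
proof (intro conjI ballI allI impI)
  show "subgrp {g. embed g = 0}"
    by (rule subgrp_kernel[OF additive_embed])
  fix g and n :: nat assume "g \<in> {g. embed g = 0}" and n: "0 < n"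
  then have g: "\<And>p. prime p \<Longrightarrow> R p g = 0"
    using embed_eq_0_iff by blast
  obtain y where "nmul n y - g \<in> torsion_part"
    using strongly_co_Hopfian_divisible_mod_torsion[OF sch n] by blast
  then obtain y' where y': "\<And>p. prime p \<Longrightarrow> R p y' = 0" "nmul n y' - g \<in> torsion_part"
    using kernel_lift_mod_torsion[OF _ n g] by blast
  then obtain M where "nmul M (nmul n y' - g) = 0" "0 < M"
    unfolding torsion_part_def by auto
  moreover have "R p (nmul n y' - g) = 0" if p: "prime p" for p
    using y'(1)[OF p] g[OF p]
    by (simp add: additive_map_diff[OF additive_R[OF p]] additive_map_nmul[OF additive_R[OF p]])
  ultimately have "nmul n y' - g = 0"
    by (rule torsion_eq_0_if_R_eq_0)
  moreover have "embed y' = 0"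
    using y'(1) embed_eq_0_iff by blast
  ultimately show "\<exists>y\<in>{g. embed g = 0}. nmul n y = g"
    by force
qed

lemma inj_embed:
  assumes sch: "strongly_co_Hopfian TYPE('a)" and red: "reduced_grp TYPE('a)"
  shows "inj embed"
proof (rule injI)
  fix a b assume "embed a = embed b"
  then have "embed (a - b) = 0"
    using additive_map_diff[OF additive_embed] by simp
  moreover have "{g. embed g = 0} = {0}"
    using divisible_kernel_embed[OF sch] red unfolding reduced_grp_def by blast
  ultimately have "a - b = 0"
    by blast
  then show "a = b"
    by simp
qed

lemma quot_torsion_free_range_embed:
  assumes inj: "inj embed"
  shows "quot_torsion_free (range embed) sumT"
  unfolding quot_torsion_free_def
proof (intro ballI allI impI)
  fix x and n :: nat assume x: "x \<in> range embed" and n: "0 < n" and nx: "nmul n x \<in> sumT"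
  obtain g where g: "x = embed g"
    using x by blast
  obtain t where t: "t \<in> torsion_part" "embed t = nmul n x"
    using sumT_subset_embed_torsion[OF nx] by blast
  then have "embed t = embed (nmul n g)"
    using g additive_map_nmul[OF additive_embed] by simp
  then have "t = nmul n g"
    by (rule injD[OF inj])
  obtain M where M: "0 < M" "nmul M t = 0"
    using t(1) unfolding torsion_part_def by blast
  then have "nmul (M * n) g = 0"
    using \<open>t = nmul n g\<close> by (simp add: nmul_mult)
  moreover have "0 < M * n"
    using M(1) n by simp
  ultimately have "g \<in> torsion_part"
    unfolding torsion_part_def by blast
  then show "x \<in> sumT"
    using embed_torsion_in_sumT g by blast
qed

lemma quot_divisible_range_embed:
  assumes sch: "strongly_co_Hopfian TYPE('a)"
  shows "quot_divisible (range embed) sumT"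
  unfolding quot_divisible_def
proof (intro ballI allI impI)
  fix x and n :: nat assume x: "x \<in> range embed" and n: "0 < n"
  obtain g where g: "x = embed g"
    using x by blast
  obtain y where "nmul n y - g \<in> torsion_part"
    using strongly_co_Hopfian_divisible_mod_torsion[OF sch n] by blast
  moreover have "nmul n (embed y) - x = embed (nmul n y - g)"
    using g by (simp add: additive_map_diff[OF additive_embed] additive_map_nmul[OF additive_embed])
  ultimately have "nmul n (embed y) - x \<in> sumT"
    using embed_torsion_in_sumT by simp
  then show "\<exists>y\<in>range embed. nmul n y - x \<in> sumT"
    by blast
qed

lemma sumT_if_nmul_embed_torsion:
  assumes w: "w \<in> prodT" and n: "0 < n" and t: "t \<in> torsion_part" and nw: "nmul n w = embed t"
  shows "w \<in> sumT"
proof -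
  obtain M where M: "0 < M" "nmul M t = 0"
    using t unfolding torsion_part_def by blast
  have "w p = 0" if "\<not> p dvd n * M" for p
  proof (cases "prime p")
    case True
    have nd: "\<not> p dvd n" "\<not> p dvd M"
      using that by (auto simp: dvd_mult dvd_mult2)
    have "nmul n (w p) = R p t"
      using nw True unfolding embed_def by (simp add: nmul_fun_apply fun_eq_iff)
    also have "\<dots> = 0"
      using R_eq_0_if_coprime[OF True M(2) nd(2)] .
    finally have "nmul n (w p) = 0" .
    moreover have "w p \<in> ppart p"
      using w True unfolding prodT_def by blast
    ultimately show ?thesis
      using ppart_eq_0_if_coprime[OF True _ _ nd(1)] by blast
  next
    case False
    then show ?thesis
      using w unfolding prodT_def by blast
  qed
  moreover have "0 < n * M"
    using n M(1) by simp
  ultimately show ?thesis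
    using sumT_if_support_dvd[OF w] by blast
qed

lemma pure_range_embed:
  assumes sch: "strongly_co_Hopfian TYPE('a)"
  shows "pure_in (range embed) prodT"
  unfolding pure_in_def
proof (intro allI impI)
  fix n x assume "x \<in> range embed \<and> (\<exists>y\<in>prodT. x = nmul n y)"
  then obtain g y where g: "x = embed g" and y: "y \<in> prodT" "x = nmul n y"
    by blast
  show "\<exists>z\<in>range embed. x = nmul n z"
  proof (cases "n = 0")
    case True
    have "0 \<in> range embed"
      using subgrp_0[OF subgrp_range[OF additive_embed]] .
    moreover have "x = nmul n 0"
      using y(2) True by simp
    ultimately show ?thesis
      by blast
  next
    case False
    obtain g' where "nmul n g' - g \<in> torsion_part"
      using strongly_co_Hopfian_divisible_mod_torsion[OF sch] False by blast
    then have "g - nmul n g' \<in> torsion_part"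
      using subgrp_neg[OF subgrp_torsion_part] by fastforce
    text \<open>The error \<open>y - embed g'\<close> of the approximate division by \<open>n\<close> lies in the direct sum.\<close>
    moreover have "nmul n (y - embed g') = embed (g - nmul n g')"
      unfolding nmul_diff using y(2) g
      by (simp add: additive_map_diff[OF additive_embed] additive_map_nmul[OF additive_embed])
    moreover have "0 < n"
      using False by simp
    ultimately have "y - embed g' \<in> sumT"
      using sumT_if_nmul_embed_torsion[OF subgrp_diff[OF subgrp_prodT y(1) embed_in_prodT]] by blast
    then obtain t where "embed t = y - embed g'"
      using sumT_subset_embed_torsion by blast
    then have "y = embed (g' + t)"
      using additive_map_add[OF additive_embed] by simp
    then show ?thesis
      using y(2) by blast
  qed
qed

end

theorem mainTheorem3:
  assumes "reduced_grp TYPE('a::ab_group_add)"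
    and "strongly_co_Hopfian TYPE('a)"
  shows "(\<forall>p. prime p \<longrightarrow> finite (ppart p :: 'a set))
    \<and> (\<exists>H :: (nat \<Rightarrow> 'a) set. subgrp H \<and> sumT \<subseteq> H \<and> H \<subseteq> prodT
          \<and> quot_torsion_free H sumT \<and> quot_divisible H sumT \<and> isomorphic_to TYPE('a) H)
    \<and> (infinite {p. prime p \<and> (ppart p :: 'a set) \<noteq> {0}} \<longrightarrow> sp_group TYPE('a))"
proof -
  have finite: "\<forall>p. prime p \<longrightarrow> finite (ppart p :: 'a set)"
    using strongly_co_Hopfian_finite_ppart[OF assms(2,1)] by blast
  then have "\<forall>p. \<exists>\<rho>. prime p \<longrightarrow> retraction \<rho> (ppart p :: 'a set)"
    using retraction_onto_finite_pure[OF _ _ subgrp_ppart order.refl p_pure_ppart] by blast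
  then obtain R :: "nat \<Rightarrow> 'a \<Rightarrow> 'a" where "\<And>p. prime p \<Longrightarrow> retraction (R p) (ppart p)"
    by metis
  then interpret ppart_projections R
    by unfold_locales
  have "inj embed"
    using inj_embed[OF assms(2,1)] .
  then have H: "subgrp (range embed)" "sumT \<subseteq> range embed" "range embed \<subseteq> prodT"
    "quot_torsion_free (range embed) sumT" "quot_divisible (range embed) sumT"
    "isomorphic_to TYPE('a) (range embed)" "pure_in (range embed) prodT"
    using subgrp_range[OF additive_embed] sumT_subset_embed_torsion embed_in_prodT
      quot_torsion_free_range_embed quot_divisible_range_embed[OF assms(2)]
      pure_range_embed[OF assms(2)] additive_embed
    unfolding isomorphic_to_def by blast+
  then show ?thesis
    using finite unfolding sp_group_def by blast
qed

end
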